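(* The map $(X,X')\mapsto\langle PX,X'\rangle$ is continuous on $\mathcal{V}\times\mathcal{V}$; more precisely, for all $X,X'\in\mathcal{V}$, $$|\langle PX,X'\rangle|\le\Big(\nu+\frac{2a^2}{\pi}\sqrt{\beta\gamma}+\frac{2\alpha a^2}{\pi^2}\Big)\|X\|_{\mathcal{V}}\|X'\|_{\mathcal{V}}.$$
   Context: Let $a>0$, $\nu>0$, $\alpha\ge0$, $\beta,\gamma>0$, $\mathbb{T}^2=(\mathbb{R}/2\pi\mathbb{Z})^2$, $\Omega=\mathbb{T}^2\times(0,a)$. $\mathcal{V}=\mathcal{V}_1\times\mathcal{V}_2$, where $\mathcal{V}_1$ is the closure in $H^1(\Omega)^2$ of smooth $(u,v)$ periodic in $x,y$, vanishing at $z=0$ and $z=a$, with $\int_0^a(\partial_xu+\partial_yv)\,dz=0$ for all $(x,y)$, and $\mathcal{V}_2$ is the closure in $H^1(\Omega)$ of smooth $\theta$ periodic in $x,y$ vanishing at $z=0,a$. For $X=(u,v,\theta)$, $X'=(u',v',\theta')\in\mathcal{V}$: $(X,X')_{\mathcal{V}}=\int_\Omega(\nabla u\cdot\nabla\bar u'+\nabla v\cdot\nabla\bar v'+\frac\beta\gamma\nabla\theta\cdot\nabla\bar\theta')$, $\|X\|_{\mathcal{V}}^2=(X,X)_{\mathcal{V}}$; $w=-\int_0^z(\partial_xu+\partial_yv)dz'$, $w'=-\int_0^z(\partial_xu'+\partial_yv')dz'$; $B(X,X')=-\int_\Omega\theta\bar w'+\int_\Omega w\bar\theta'$; $C(X,X')=-\int_\Omega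 v\bar u'+\int_\Omega u\bar v'$; and $\langle PX,X'\rangle=\nu(X,X')_{\mathcal{V}}+\beta B(X,X')+\alpha C(X,X')$. *)

theory Defs
  imports "HOL-Analysis.Analysis"
begin

type_synonym pt = "real \<times> real \<times> real"
type_synonym fld = "pt \<Rightarrow> complex"
type_synonym grd = "nat \<Rightarrow> pt \<Rightarrow> complex"

text \<open>Fundamental cell of Omega = T^2 x (0,a); functions are 2pi-periodic in x,y.\<close>
definition cell :: "real \<Rightarrow> pt set" where
  "cell a = {0<..<2*pi} \<times> {0<..<2*pi} \<times> {0<..<a}"

definition unitv :: "nat \<Rightarrow> pt" where
  "unitv i = (if i = 0 then (1,0,0) else if i = 1 then (0,1,0) else (0,0,1))"

definition pd :: "nat \<Rightarrow> fld \<Rightarrow> fld" where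
  "pd i f = (\<lambda>p. frechet_derivative f (at p) (unitv i))"

fun Diter :: "pt list \<Rightarrow> fld \<Rightarrow> fld" where
  "Diter [] f = f"
| "Diter (e # es) f = (\<lambda>p. frechet_derivative (Diter es f) (at p) e)"

definition smooth3 :: "fld \<Rightarrow> bool" where
  "smooth3 f \<longleftrightarrow> (\<forall>es p. Diter es f differentiable (at p))"

definition periodic_xy :: "fld \<Rightarrow> bool" where
  "periodic_xy f \<longleftrightarrow> (\<forall>x y z. f (x + 2*pi, y, z) = f (x, y, z) \<and> f (x, y + 2*pi, z) = f (x, y, z))"

definition vanish_bdry :: "real \<Rightarrow> fld \<Rightarrow> bool" where
  "vanish_bdry a f \<longleftrightarrow> (\<forall>x y. f (x, y, 0) = 0 \<and> f (x, y, a) = 0)"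

definition L2 :: "real \<Rightarrow> fld \<Rightarrow> bool" where
  "L2 a f \<longleftrightarrow> f \<in> borel_measurable lborel \<and> set_integrable lborel (cell a) (\<lambda>p. (cmod (f p))^2)"

definition dist2 :: "real \<Rightarrow> fld \<Rightarrow> fld \<Rightarrow> real" where
  "dist2 a f g = (LINT p:cell a|lborel. (cmod (f p - g p))^2)"

definition adm1 :: "real \<Rightarrow> fld \<Rightarrow> fld \<Rightarrow> bool" where
  "adm1 a u v \<longleftrightarrow> smooth3 u \<and> smooth3 v \<and> periodic_xy u \<and> periodic_xy v
     \<and> vanish_bdry a u \<and> vanish_bdry a v
     \<and> (\<forall>x y. (LINT z:{0..a}|lborel. pd 0 u (x, y, z) + pd 1 v (x, y, z)) = 0)"

definition adm2 :: "real \<Rightarrow> fld \<Rightarrow> bool" where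
  "adm2 a \<theta> \<longleftrightarrow> smooth3 \<theta> \<and> periodic_xy \<theta> \<and> vanish_bdry a \<theta>"

text \<open>An element of H^1(Omega) is a pair (f, Df) of an L^2 function and its (weak) gradient
  Df 0, Df 1, Df 2.  (u,v,Du,Dv) lies in V1, the H^1(Omega)^2-closure of adm1, iff it is the
  H^1-limit of a sequence from adm1.\<close>
definition inV1 :: "real \<Rightarrow> fld \<Rightarrow> fld \<Rightarrow> grd \<Rightarrow> grd \<Rightarrow> bool" where
  "inV1 a u v Du Dv \<longleftrightarrow> L2 a u \<and> L2 a v \<and> (\<forall>i<3. L2 a (Du i) \<and> L2 a (Dv i)) \<and>
     (\<exists>U V. (\<forall>n. adm1 a (U n) (V n)) \<and>
        (\<lambda>n. dist2 a (U n) u) \<longlonglongrightarrow> 0 \<and> (\<lambda>n. dist2 a (V n) v) \<longlonglongrightarrow> 0 \<and>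
        (\<forall>i<3. (\<lambda>n. dist2 a (pd i (U n)) (Du i)) \<longlonglongrightarrow> 0 \<and>
               (\<lambda>n. dist2 a (pd i (V n)) (Dv i)) \<longlonglongrightarrow> 0))"

definition inV2 :: "real \<Rightarrow> fld \<Rightarrow> grd \<Rightarrow> bool" where
  "inV2 a \<theta> D\<theta> \<longleftrightarrow> L2 a \<theta> \<and> (\<forall>i<3. L2 a (D\<theta> i)) \<and>
     (\<exists>T. (\<forall>n. adm2 a (T n)) \<and> (\<lambda>n. dist2 a (T n) \<theta>) \<longlonglongrightarrow> 0 \<and>
        (\<forall>i<3. (\<lambda>n. dist2 a (pd i (T n)) (D\<theta> i)) \<longlonglongrightarrow> 0))"

definition wfun :: "grd \<Rightarrow> grd \<Rightarrow> fld" where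
  "wfun Du Dv = (\<lambda>(x, y, z). - (LINT t:{0..z}|lborel. Du 0 (x, y, t) + Dv 1 (x, y, t)))"

definition innerV :: "real \<Rightarrow> real \<Rightarrow> real \<Rightarrow> grd \<Rightarrow> grd \<Rightarrow> grd \<Rightarrow> grd \<Rightarrow> grd \<Rightarrow> grd \<Rightarrow> complex" where
  "innerV a \<beta> \<gamma> Du Dv D\<theta> Du' Dv' D\<theta>' =
     (LINT p:cell a|lborel. (\<Sum>i<3. Du i p * cnj (Du' i p) + Dv i p * cnj (Dv' i p)
                                  + of_real (\<beta>/\<gamma>) * D\<theta> i p * cnj (D\<theta>' i p)))"

definition normV :: "real \<Rightarrow> real \<Rightarrow> real \<Rightarrow> grd \<Rightarrow> grd \<Rightarrow> grd \<Rightarrow> real" where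
  "normV a \<beta> \<gamma> Du Dv D\<theta> = sqrt (Re (innerV a \<beta> \<gamma> Du Dv D\<theta> Du Dv D\<theta>))"

definition Bform :: "real \<Rightarrow> fld \<Rightarrow> grd \<Rightarrow> grd \<Rightarrow> fld \<Rightarrow> grd \<Rightarrow> grd \<Rightarrow> complex" where
  "Bform a \<theta> Du Dv \<theta>' Du' Dv' =
     - (LINT p:cell a|lborel. \<theta> p * cnj (wfun Du' Dv' p))
     + (LINT p:cell a|lborel. wfun Du Dv p * cnj (\<theta>' p))"

definition Cform :: "real \<Rightarrow> fld \<Rightarrow> fld \<Rightarrow> fld \<Rightarrow> fld \<Rightarrow> complex" where
  "Cform a u v u' v' =
     - (LINT p:cell a|lborel. v p * cnj (u' p)) + (LINT p:cell a|lborel. u p * cnj (v' p))"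

text \<open>The sesquilinear form <P X, X'> for X = (u,v,theta) with gradients Du, Dv, Dtheta.\<close>
definition Pform :: "real \<Rightarrow> real \<Rightarrow> real \<Rightarrow> real \<Rightarrow> real \<Rightarrow>
    fld \<Rightarrow> fld \<Rightarrow> fld \<Rightarrow> grd \<Rightarrow> grd \<Rightarrow> grd \<Rightarrow>
    fld \<Rightarrow> fld \<Rightarrow> fld \<Rightarrow> grd \<Rightarrow> grd \<Rightarrow> grd \<Rightarrow> complex" where
  "Pform a \<nu> \<alpha> \<beta> \<gamma> u v \<theta> Du Dv D\<theta> u' v' \<theta>' Du' Dv' D\<theta>' =
     of_real \<nu> * innerV a \<beta> \<gamma> Du Dv D\<theta> Du' Dv' D\<theta>'
     + of_real \<beta> * Bform a \<theta> Du Dv \<theta>' Du' Dv'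
     + of_real \<alpha> * Cform a u v u' v'"

end

theory Submission
  imports Defs
begin

text \<open>
  The three parts of the form are estimated separately. The viscous part is the Cauchy-Schwarz
  inequality for the V inner product. The parts B and C only involve zeroth-order quantities,
  which are controlled by first-order ones: a one-dimensional Poincare inequality in the vertical
  variable, |f|^2 <= a^2/8 |d_z f|^2 for f vanishing at z = 0 and z = a (proved for smooth
  functions and passed to the H^1-closure), and the estimate |w|^2 <= 2 a^2 (|d_x u|^2 + |d_y v|^2)
  obtained from Cauchy-Schwarz along vertical columns. This gives
  beta |B| <= a^2/2 sqrt (beta gamma) |X| |X'| and |C| <= a^2/8 |X| |X'|, and the stated constants
  follow from pi <= 4.
\<close>

section \<open>Cauchy-Schwarz inequalities for integrals\<close>

lemma ennreal_le_sqrt_if_power2_le: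
  fixes X :: ennreal
  assumes X: "X\<^sup>2 \<le> ennreal c" and c: "c \<ge> 0"
  shows "X \<le> ennreal (sqrt c)"
proof (cases X)
  case (real r)
  hence "r\<^sup>2 \<le> c" using X c by (simp add: ennreal_power ennreal_le_iff)
  hence "r \<le> sqrt c" by (rule real_le_rsqrt)
  thus ?thesis using real by (simp add: ennreal_leI)
qed (use X in \<open>simp add: top_unique\<close>)

lemma nn_integral_mult_le_sqrt:
  fixes f g :: "'a \<Rightarrow> real"
  assumes [measurable]: "f \<in> borel_measurable M" "g \<in> borel_measurable M"
    and f0: "\<And>x. f x \<ge> 0" and g0: "\<And>x. g x \<ge> 0"
    and fA: "(\<integral>\<^sup>+x. ennreal ((f x)\<^sup>2) \<partial>M) \<le> ennreal A"
    and gB: "(\<integral>\<^sup>+x. ennreal ((g x)\<^sup>2) \<partial>M) \<le> ennreal B"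
    and "A \<ge> 0" "B \<ge> 0"
  shows "(\<integral>\<^sup>+x. ennreal (f x * g x) \<partial>M) \<le> ennreal (sqrt A * sqrt B)"
proof -
  have "(\<integral>\<^sup>+x. ennreal (f x * g x) \<partial>M)\<^sup>2 = (\<integral>\<^sup>+x. ennreal (f x) * ennreal (g x) \<partial>M)\<^sup>2"
    using f0 g0 by (simp add: ennreal_mult)
  also have "\<dots> \<le> (\<integral>\<^sup>+x. ennreal (f x) ^ 2 \<partial>M) * (\<integral>\<^sup>+x. ennreal (g x) ^ 2 \<partial>M)"
    by (rule Cauchy_Schwarz_nn_integral) measurable
  also have "\<dots> \<le> ennreal A * ennreal B"
    using fA gB f0 g0 by (intro mult_mono) (simp_all add: ennreal_power)
  finally have "(\<integral>\<^sup>+x. ennreal (f x * g x) \<partial>M)\<^sup>2 \<le> ennreal (A * B)"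
    using \<open>A \<ge> 0\<close> \<open>B \<ge> 0\<close> by (simp add: ennreal_mult)
  from ennreal_le_sqrt_if_power2_le[OF this] show ?thesis
    using \<open>A \<ge> 0\<close> \<open>B \<ge> 0\<close> by (simp add: real_sqrt_mult)
qed

lemma norm_set_integral_le_sqrt:
  fixes F :: "'a \<Rightarrow> 'b::{banach, second_countable_topology}" and f g :: "'a \<Rightarrow> real"
  assumes [measurable]: "S \<in> sets M" "f \<in> borel_measurable M" "g \<in> borel_measurable M"
    and f0: "\<And>x. f x \<ge> 0" and g0: "\<And>x. g x \<ge> 0"
    and F: "AE x in M. x \<in> S \<longrightarrow> norm (F x) \<le> f x * g x"
    and fA: "(\<integral>\<^sup>+x. ennreal ((f x)\<^sup>2) * indicator S x \<partial>M) \<le> ennreal A"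
    and gB: "(\<integral>\<^sup>+x. ennreal ((g x)\<^sup>2) * indicator S x \<partial>M) \<le> ennreal B"
    and A: "A \<ge> 0" and B: "B \<ge> 0"
  shows "norm (LINT x:S|M. F x) \<le> sqrt A * sqrt B"
proof (cases "set_integrable M S F")
  case True
  have ind_sq: "(\<integral>\<^sup>+x. ennreal ((indicator S x * h x)\<^sup>2) \<partial>M) = (\<integral>\<^sup>+x. ennreal ((h x)\<^sup>2) * indicator S x \<partial>M)"
    for h :: "'a \<Rightarrow> real"
    by (intro nn_integral_cong) (simp split: split_indicator)
  have "ennreal (norm (LINT x:S|M. F x)) \<le> (\<integral>\<^sup>+x. norm (indicator S x *\<^sub>R F x) \<partial>M)"
    using True unfolding set_lebesgue_integral_def set_integrable_def
    by (rule integral_norm_bound_ennreal)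
  also have "\<dots> \<le> (\<integral>\<^sup>+x. ennreal (indicator S x * f x * (indicator S x * g x)) \<partial>M)"
    using F by (intro nn_integral_mono_AE, eventually_elim) (auto split: split_indicator intro: ennreal_leI)
  also have "\<dots> \<le> ennreal (sqrt A * sqrt B)"
    using f0 g0 fA gB A B unfolding ind_sq[symmetric]
    by (intro nn_integral_mult_le_sqrt) (simp_all split: split_indicator)
  finally show ?thesis using A B by simp
next
  case False
  thus ?thesis using A B by (simp add: set_lebesgue_integral_def set_integrable_def not_integrable_integral_eq)
qed

section \<open>Square-integrable functions on the cell\<close>

lemma cell_open: "open (cell a)"
  unfolding cell_def by (intro open_Times open_greaterThanLessThan)

lemma cell_sets [measurable]: "cell a \<in> sets borel"
  using cell_open by simp

definition L2_nn_sqnorm :: "real \<Rightarrow> fld \<Rightarrow> ennreal" where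
  "L2_nn_sqnorm a f = (\<integral>\<^sup>+p. ennreal ((cmod (f p))\<^sup>2) * indicator (cell a) p \<partial>lborel)"

definition L2_sqnorm :: "real \<Rightarrow> fld \<Rightarrow> real" where
  "L2_sqnorm a f = (LINT p:cell a|lborel. (cmod (f p))\<^sup>2)"

lemma L2_iff: "L2 a f \<longleftrightarrow> f \<in> borel_measurable lborel \<and> L2_nn_sqnorm a f < \<infinity>"
proof -
  have "(\<integral>\<^sup>+p. ennreal (norm (indicator (cell a) p *\<^sub>R (cmod (f p))\<^sup>2)) \<partial>lborel) = L2_nn_sqnorm a f"
    unfolding L2_nn_sqnorm_def by (intro nn_integral_cong) (simp split: split_indicator)
  thus ?thesis
    unfolding L2_def set_integrable_def by (subst integrable_iff_bounded) auto
qed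

lemma L2_measurable: "L2 a f \<Longrightarrow> f \<in> borel_measurable borel"
  by (simp add: L2_def)

lemma L2_sqnorm_nonneg: "L2_sqnorm a f \<ge> 0"
  unfolding L2_sqnorm_def set_lebesgue_integral_def by (intro integral_nonneg_AE) simp

lemma L2_nn_sqnorm_eq:
  assumes "L2 a f" shows "L2_nn_sqnorm a f = ennreal (L2_sqnorm a f)"
proof -
  have "L2_nn_sqnorm a f = (\<integral>\<^sup>+p. ennreal (indicator (cell a) p *\<^sub>R (cmod (f p))\<^sup>2) \<partial>lborel)"
    unfolding L2_nn_sqnorm_def by (intro nn_integral_cong) (simp split: split_indicator)
  also have "\<dots> = ennreal (L2_sqnorm a f)"
    using assms unfolding L2_sqnorm_def set_lebesgue_integral_def L2_def set_integrable_def
    by (intro nn_integral_eq_integral) (auto split: split_indicator)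
  finally show ?thesis .
qed

lemma L2_nn_sqnorm_add_le:
  assumes [measurable]: "f \<in> borel_measurable borel" "g \<in> borel_measurable borel"
  shows "L2_nn_sqnorm a (\<lambda>p. f p + g p) \<le> 2 * L2_nn_sqnorm a f + 2 * L2_nn_sqnorm a g"
proof -
  have pointwise: "ennreal ((cmod (f p + g p))\<^sup>2) \<le> 2 * ennreal ((cmod (f p))\<^sup>2) + 2 * ennreal ((cmod (g p))\<^sup>2)" for p
  proof -
    have "(cmod (f p + g p))\<^sup>2 \<le> (cmod (f p) + cmod (g p))\<^sup>2"
      by (intro power_mono norm_triangle_ineq) auto
    also have "\<dots> \<le> 2 * (cmod (f p))\<^sup>2 + 2 * (cmod (g p))\<^sup>2"
      using sum_squares_ge_zero[of "cmod (f p) - cmod (g p)" 0] by (simp add: power2_eq_square algebra_simps)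
    finally have "ennreal ((cmod (f p + g p))\<^sup>2) \<le> ennreal (2 * (cmod (f p))\<^sup>2 + 2 * (cmod (g p))\<^sup>2)"
      by (rule ennreal_leI)
    thus ?thesis by (simp add: ennreal_plus ennreal_mult)
  qed
  have "L2_nn_sqnorm a (\<lambda>p. f p + g p) \<le> (\<integral>\<^sup>+p. 2 * (ennreal ((cmod (f p))\<^sup>2) * indicator (cell a) p)
          + 2 * (ennreal ((cmod (g p))\<^sup>2) * indicator (cell a) p) \<partial>lborel)"
    unfolding L2_nn_sqnorm_def using pointwise
    by (intro nn_integral_mono) (simp split: split_indicator)
  also have "\<dots> = 2 * L2_nn_sqnorm a f + 2 * L2_nn_sqnorm a g"
    unfolding L2_nn_sqnorm_def by (simp add: nn_integral_add nn_integral_cmult)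
  finally show ?thesis .
qed

lemma L2_diff:
  assumes "L2 a f" "L2 a g" shows "L2 a (\<lambda>p. f p - g p)"
proof -
  have [measurable]: "f \<in> borel_measurable borel" "g \<in> borel_measurable borel"
    using assms by (simp_all add: L2_measurable)
  have "L2_nn_sqnorm a (\<lambda>p. f p + - g p) \<le> 2 * L2_nn_sqnorm a f + 2 * L2_nn_sqnorm a (\<lambda>p. - g p)"
    by (intro L2_nn_sqnorm_add_le) measurable
  also have "\<dots> < \<infinity>"
    using assms by (simp add: L2_iff L2_nn_sqnorm_def ennreal_mult_less_top)
  finally show ?thesis using assms by (simp add: L2_iff)
qed

lemma dist2_commute: "dist2 a f g = dist2 a g f"
  unfolding dist2_def by (simp add: norm_minus_commute)

lemma L2_sqnorm_triangle:
  assumes f: "L2 a f" and g: "L2 a g"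
  shows "sqrt (L2_sqnorm a f) \<le> sqrt (L2_sqnorm a g) + sqrt (dist2 a f g)"
proof -
  let ?h = "\<lambda>p. f p - g p"
  have [measurable]: "f \<in> borel_measurable borel" "g \<in> borel_measurable borel"
    using f g by (simp_all add: L2_measurable)
  let ?G = "L2_sqnorm a g" and ?H = "L2_sqnorm a ?h"
  have h: "L2 a ?h" by (rule L2_diff[OF f g])
  have ind_sq: "(\<integral>\<^sup>+p. ennreal ((indicator (cell a) p * cmod (k p))\<^sup>2) \<partial>lborel) = L2_nn_sqnorm a k" for k
    unfolding L2_nn_sqnorm_def by (intro nn_integral_cong) (simp split: split_indicator)
  have cross: "(\<integral>\<^sup>+p. ennreal (indicator (cell a) p * cmod (g p) * (indicator (cell a) p * cmod (?h p))) \<partial>lborel)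
      \<le> ennreal (sqrt ?G * sqrt ?H)"
    using g h by (intro nn_integral_mult_le_sqrt)
      (simp_all add: ind_sq L2_nn_sqnorm_eq L2_sqnorm_nonneg)
  have "L2_nn_sqnorm a f \<le> (\<integral>\<^sup>+p. ennreal ((cmod (g p))\<^sup>2) * indicator (cell a) p
       + 2 * ennreal (indicator (cell a) p * cmod (g p) * (indicator (cell a) p * cmod (?h p)))
       + ennreal ((cmod (?h p))\<^sup>2) * indicator (cell a) p \<partial>lborel)"
    unfolding L2_nn_sqnorm_def
  proof (intro nn_integral_mono)
    fix p
    have "cmod (f p) \<le> cmod (g p) + cmod (?h p)" using norm_triangle_ineq[of "g p" "?h p"] by simp
    hence "(cmod (f p))\<^sup>2 \<le> (cmod (g p) + cmod (?h p))\<^sup>2"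
      by (intro power_mono) auto
    hence "(cmod (f p))\<^sup>2 \<le> (cmod (g p))\<^sup>2 + 2 * (cmod (g p) * cmod (?h p)) + (cmod (?h p))\<^sup>2"
      by (simp add: power2_sum)
    hence "ennreal ((cmod (f p))\<^sup>2) \<le> ennreal ((cmod (g p))\<^sup>2 + 2 * (cmod (g p) * cmod (?h p)) + (cmod (?h p))\<^sup>2)"
      by (rule ennreal_leI)
    hence "ennreal ((cmod (f p))\<^sup>2) \<le> ennreal ((cmod (g p))\<^sup>2) + 2 * ennreal (cmod (g p) * cmod (?h p)) + ennreal ((cmod (?h p))\<^sup>2)"
      by (simp add: ennreal_plus ennreal_mult)
    thus "ennreal ((cmod (f p))\<^sup>2) * indicator (cell a) p \<le> ennreal ((cmod (g p))\<^sup>2) * indicator (cell a) p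
       + 2 * ennreal (indicator (cell a) p * cmod (g p) * (indicator (cell a) p * cmod (?h p)))
       + ennreal ((cmod (?h p))\<^sup>2) * indicator (cell a) p"
      by (simp split: split_indicator)
  qed
  also have "\<dots> = L2_nn_sqnorm a g + 2 * (\<integral>\<^sup>+p. ennreal (indicator (cell a) p * cmod (g p) * (indicator (cell a) p * cmod (?h p))) \<partial>lborel)
      + L2_nn_sqnorm a ?h"
    unfolding L2_nn_sqnorm_def using f g by (simp add: nn_integral_add nn_integral_cmult)
  also have "\<dots> \<le> ennreal ?G + 2 * ennreal (sqrt ?G * sqrt ?H) + ennreal ?H"
    using cross g h by (simp add: L2_nn_sqnorm_eq add_mono mult_left_mono)
  also have "\<dots> = ennreal (?G + 2 * (sqrt ?G * sqrt ?H) + ?H)"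
    using L2_sqnorm_nonneg[of a g] L2_sqnorm_nonneg[of a ?h] by (simp add: ennreal_mult)
  also have "?G + 2 * (sqrt ?G * sqrt ?H) + ?H = (sqrt ?G + sqrt ?H)\<^sup>2"
    using L2_sqnorm_nonneg[of a g] L2_sqnorm_nonneg[of a ?h] by (simp add: power2_sum)
  finally have "L2_sqnorm a f \<le> (sqrt ?G + sqrt ?H)\<^sup>2"
    using f by (simp add: L2_nn_sqnorm_eq ennreal_le_iff)
  hence "sqrt (L2_sqnorm a f) \<le> sqrt ?G + sqrt ?H"
    using L2_sqnorm_nonneg[of a g] L2_sqnorm_nonneg[of a ?h] by (intro real_le_lsqrt) auto
  moreover have "dist2 a f g = ?H"
    unfolding dist2_def L2_sqnorm_def ..
  ultimately show ?thesis by simp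
qed

lemma L2_sqnorm_tendsto:
  assumes h: "L2 a h" and H: "\<And>n. L2 a (H n)" and lim: "(\<lambda>n. dist2 a (H n) h) \<longlonglongrightarrow> 0"
  shows "(\<lambda>n. L2_sqnorm a (H n)) \<longlonglongrightarrow> L2_sqnorm a h"
proof -
  have "(\<lambda>n. sqrt (L2_sqnorm a (H n)) - sqrt (L2_sqnorm a h)) \<longlonglongrightarrow> 0"
  proof (rule Lim_null_comparison)
    show "\<forall>\<^sub>F n in sequentially. norm (sqrt (L2_sqnorm a (H n)) - sqrt (L2_sqnorm a h)) \<le> sqrt (dist2 a (H n) h)"
    proof (intro always_eventually allI)
      fix n
      show "norm (sqrt (L2_sqnorm a (H n)) - sqrt (L2_sqnorm a h)) \<le> sqrt (dist2 a (H n) h)"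
        using L2_sqnorm_triangle[OF H h, of n] L2_sqnorm_triangle[OF h H, of n]
        unfolding real_norm_def abs_le_iff dist2_commute[of a h "H n"] by linarith
    qed
    show "(\<lambda>n. sqrt (dist2 a (H n) h)) \<longlonglongrightarrow> 0"
      using tendsto_real_sqrt[OF lim] by simp
  qed
  hence "(\<lambda>n. sqrt (L2_sqnorm a (H n))) \<longlonglongrightarrow> sqrt (L2_sqnorm a h)"
    by (rule LIM_zero_cancel)
  from tendsto_power[OF this, of 2] show ?thesis
    by (simp add: L2_sqnorm_nonneg)
qed

lemma continuous_imp_L2:
  assumes f: "continuous_on UNIV f" shows "L2 a f"
proof -
  define K where "K = {0..2*pi} \<times> {0..2*pi} \<times> {0..\<bar>a\<bar>}"
  have K: "compact K" unfolding K_def by (intro compact_Times compact_Icc)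
  have "cell a \<subseteq> K" unfolding cell_def K_def by auto
  obtain B where B: "\<And>p. p \<in> K \<Longrightarrow> cmod (f p) \<le> B"
    using compact_imp_bounded[OF compact_continuous_image[OF continuous_on_subset[OF f] K]]
    unfolding bounded_iff by auto
  have "L2_nn_sqnorm a f \<le> (\<integral>\<^sup>+p. ennreal (B\<^sup>2) * indicator K p \<partial>lborel)"
    unfolding L2_nn_sqnorm_def using \<open>cell a \<subseteq> K\<close> B
    by (intro nn_integral_mono) (auto split: split_indicator intro!: ennreal_leI power_mono)
  also have "\<dots> = ennreal (B\<^sup>2) * emeasure lborel K"
    using K by (simp add: nn_integral_cmult_indicator borel_compact)
  also have "\<dots> < \<infinity>"
    using emeasure_compact_finite[OF K] by (simp add: ennreal_mult_less_top)
  finally show ?thesis using borel_measurable_continuous_onI[OF f] by (simp add: L2_iff)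
qed

lemma norm_L2_inner_le:
  assumes "L2 a f" "L2 a g"
  shows "cmod (LINT p:cell a|lborel. f p * cnj (g p)) \<le> sqrt (L2_sqnorm a f) * sqrt (L2_sqnorm a g)"
proof -
  have [measurable]: "f \<in> borel_measurable borel" "g \<in> borel_measurable borel"
    using assms by (simp_all add: L2_measurable)
  show ?thesis
    using assms
    by (intro norm_set_integral_le_sqrt[where f="\<lambda>p. cmod (f p)" and g="\<lambda>p. cmod (g p)"])
    (auto simp: norm_mult L2_sqnorm_nonneg L2_nn_sqnorm_eq[symmetric] L2_nn_sqnorm_def)
qed

section \<open>The Poincare inequality in the vertical variable\<close>

lemma nn_integral_interval_dist_left:
  assumes "l \<le> u"
  shows "(\<integral>\<^sup>+z. ennreal (z - l) * indicator {l..u} z \<partial>lborel) = ennreal ((u - l)\<^sup>2 / 2)"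
proof -
  have "((\<lambda>z. z - l) has_integral ((u - l)\<^sup>2 / 2 - (l - l)\<^sup>2 / 2)) {l..u}"
  proof (rule fundamental_theorem_of_calculus[OF assms])
    fix x assume "x \<in> {l..u}"
    have "((\<lambda>z. (z - l)\<^sup>2 / 2) has_real_derivative (x - l)) (at x within {l..u})"
      by (auto intro!: derivative_eq_intros)
    thus "((\<lambda>z. (z - l)\<^sup>2 / 2) has_vector_derivative (x - l)) (at x within {l..u})"
      by (simp add: has_real_derivative_iff_has_vector_derivative)
  qed
  hence "(\<integral>\<^sup>+z. ennreal (indicator {l..u} z * (z - l)) \<partial>lborel) = ennreal ((u - l)\<^sup>2 / 2)"
    by (intro nn_integral_has_integral_lebesgue) auto
  thus ?thesis
    by (metis (no_types, lifting) indicator_mult_ennreal mult.commute nn_integral_cong)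
qed

lemma nn_integral_interval_dist_right:
  assumes "l \<le> u"
  shows "(\<integral>\<^sup>+z. ennreal (u - z) * indicator {l..u} z \<partial>lborel) = ennreal ((u - l)\<^sup>2 / 2)"
proof -
  define F where "F z = - (u - z)\<^sup>2 / 2" for z
  have "((\<lambda>z. u - z) has_integral (F u - F l)) {l..u}"
  proof (rule fundamental_theorem_of_calculus[OF assms])
    fix x assume "x \<in> {l..u}"
    have "(F has_real_derivative (u - x)) (at x within {l..u})"
      unfolding F_def by (auto intro!: derivative_eq_intros simp: field_simps)
    thus "(F has_vector_derivative (u - x)) (at x within {l..u})"
      by (simp add: has_real_derivative_iff_has_vector_derivative)
  qed
  hence "(\<integral>\<^sup>+z. ennreal (indicator {l..u} z * (u - z)) \<partial>lborel) = ennreal ((u - l)\<^sup>2 / 2)"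
    by (intro nn_integral_has_integral_lebesgue) (auto simp: F_def)
  thus ?thesis
    by (metis (no_types, lifting) indicator_mult_ennreal mult.commute nn_integral_cong)
qed

lemma nn_integral_interval_split:
  fixes f :: "real \<Rightarrow> ennreal"
  assumes [measurable]: "f \<in> borel_measurable borel" and "l \<le> m" "m \<le> u"
  shows "(\<integral>\<^sup>+z. f z * indicator {l..m} z \<partial>lborel) + (\<integral>\<^sup>+z. f z * indicator {m..u} z \<partial>lborel)
    = (\<integral>\<^sup>+z. f z * indicator {l<..<u} z \<partial>lborel)"
proof -
  have halves: "indicator {l..m} z + indicator {m..u} z = (indicator {l<..<u} z :: ennreal)"
    if "z \<noteq> l" "z \<noteq> m" "z \<noteq> u" for z
    using that assms(2,3) by (auto simp: indicator_def)
  have "(\<integral>\<^sup>+z. f z * indicator {l..m} z \<partial>lborel) + (\<integral>\<^sup>+z. f z * indicator {m..u} z \<partial>lborel)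
      = (\<integral>\<^sup>+z. f z * (indicator {l..m} z + indicator {m..u} z) \<partial>lborel)"
    by (simp add: nn_integral_add distrib_left)
  also have "\<dots> = (\<integral>\<^sup>+z. f z * indicator {l<..<u} z \<partial>lborel)"
    using AE_lborel_singleton[of l] AE_lborel_singleton[of m] AE_lborel_singleton[of u]
    by (intro nn_integral_cong_AE, eventually_elim) (simp add: halves)
  finally show ?thesis .
qed

lemma norm_diff_sq_le_nn_integral:
  fixes g g' :: "real \<Rightarrow> 'a::euclidean_space"
  assumes g: "\<And>z. (g has_vector_derivative g' z) (at z)" and g': "continuous_on UNIV g'"
    and "l \<le> u"
  shows "ennreal ((norm (g u - g l))\<^sup>2)
    \<le> ennreal (u - l) * (\<integral>\<^sup>+t. ennreal ((norm (g' t))\<^sup>2) * indicator {l..u} t \<partial>lborel)"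
proof (cases "(\<integral>\<^sup>+t. ennreal ((norm (g' t))\<^sup>2) * indicator {l..u} t \<partial>lborel)")
  case (real J)
  have [measurable]: "g' \<in> borel_measurable borel"
    using g' by (rule borel_measurable_continuous_onI)
  have "g u - g l = (LINT t:{l..u}|lborel. g' t)"
    unfolding set_lebesgue_integral_def using \<open>l \<le> u\<close> g continuous_on_subset[OF g']
    by (intro integral_FTC_atLeastAtMost[symmetric]) (auto intro: has_vector_derivative_at_within)
  also have "norm \<dots> \<le> sqrt J * sqrt (u - l)"
    using real \<open>l \<le> u\<close>
    by (intro norm_set_integral_le_sqrt[where f="\<lambda>t. norm (g' t)" and g="\<lambda>_. 1"]) auto
  finally have "(norm (g u - g l))\<^sup>2 \<le> (sqrt J * sqrt (u - l))\<^sup>2"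
    by (intro power_mono) auto
  also have "\<dots> = (u - l) * J"
    using real \<open>l \<le> u\<close> by (simp add: power_mult_distrib)
  finally have "ennreal ((norm (g u - g l))\<^sup>2) \<le> ennreal ((u - l) * J)"
    by (rule ennreal_leI)
  thus ?thesis
    using real \<open>l \<le> u\<close> by (simp add: ennreal_mult)
next
  case top
  thus ?thesis using \<open>l \<le> u\<close> by (cases "l = u") (auto simp: ennreal_mult_top)
qed

lemma Poincare_interval:
  fixes g g' :: "real \<Rightarrow> 'a::euclidean_space"
  assumes a: "a > 0" and g: "\<And>z. (g has_vector_derivative g' z) (at z)" and g': "continuous_on UNIV g'"
    and "g 0 = 0" "g a = 0"
  shows "(\<integral>\<^sup>+z. ennreal ((norm (g z))\<^sup>2) * indicator {0<..<a} z \<partial>lborel)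
     \<le> ennreal (a\<^sup>2 / 8) * (\<integral>\<^sup>+z. ennreal ((norm (g' z))\<^sup>2) * indicator {0<..<a} z \<partial>lborel)"
proof -
  have [measurable]: "g' \<in> borel_measurable borel"
    using g' by (rule borel_measurable_continuous_onI)
  define J where "J l u = (\<integral>\<^sup>+t. ennreal ((norm (g' t))\<^sup>2) * indicator {l..u} t \<partial>lborel)" for l u
  have J_mono: "J l u \<le> J l' u'" if "l' \<le> l" "u \<le> u'" for l u l' u'
    unfolding J_def using that by (intro nn_integral_mono) (simp split: split_indicator)
  \<comment> \<open>Integrate from the nearer endpoint: the weight is z on the left half and a - z on the right.\<close>
  have left: "ennreal ((norm (g z))\<^sup>2) \<le> J 0 (a/2) * ennreal z" if "0 \<le> z" "z \<le> a/2" for z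
  proof -
    have "ennreal ((norm (g z))\<^sup>2) \<le> ennreal z * J 0 z"
      using norm_diff_sq_le_nn_integral[OF g g' \<open>0 \<le> z\<close>] \<open>g 0 = 0\<close> by (simp add: J_def)
    also have "\<dots> \<le> ennreal z * J 0 (a/2)"
      using that by (intro mult_left_mono J_mono) auto
    finally show ?thesis by (simp add: mult.commute)
  qed
  have right: "ennreal ((norm (g z))\<^sup>2) \<le> J (a/2) a * ennreal (a - z)" if "a/2 \<le> z" "z \<le> a" for z
  proof -
    have "ennreal ((norm (g z))\<^sup>2) \<le> ennreal (a - z) * J z a"
      using norm_diff_sq_le_nn_integral[OF g g' \<open>z \<le> a\<close>] \<open>g a = 0\<close> by (simp add: J_def)
    also have "\<dots> \<le> ennreal (a - z) * J (a/2) a"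
      using that by (intro mult_left_mono J_mono) auto
    finally show ?thesis by (simp add: mult.commute)
  qed
  have "(\<integral>\<^sup>+z. ennreal ((norm (g z))\<^sup>2) * indicator {0<..<a} z \<partial>lborel)
      \<le> (\<integral>\<^sup>+z. J 0 (a/2) * (ennreal z * indicator {0..a/2} z) + J (a/2) a * (ennreal (a - z) * indicator {a/2..a} z) \<partial>lborel)"
  proof (intro nn_integral_mono)
    fix z
    show "ennreal ((norm (g z))\<^sup>2) * indicator {0<..<a} z
      \<le> J 0 (a/2) * (ennreal z * indicator {0..a/2} z) + J (a/2) a * (ennreal (a - z) * indicator {a/2..a} z)"
    proof (cases "z \<le> a/2")
      case True
      thus ?thesis
        using left[of z] by (simp split: split_indicator add: add_increasing2)
    next
      case False
      thus ?thesis
        using right[of z] by (simp split: split_indicator add: add_increasing)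
    qed
  qed
  also have "\<dots> = J 0 (a/2) * ennreal (a\<^sup>2 / 8) + J (a/2) a * ennreal (a\<^sup>2 / 8)"
  proof -
    have "(\<integral>\<^sup>+z. ennreal z * indicator {0..a/2} z \<partial>lborel) = ennreal (a\<^sup>2 / 8)"
      using nn_integral_interval_dist_left[of 0 "a/2"] a by (simp add: power_divide)
    moreover have "(\<integral>\<^sup>+z. ennreal (a - z) * indicator {a/2..a} z \<partial>lborel) = ennreal (a\<^sup>2 / 8)"
      using nn_integral_interval_dist_right[of "a/2" a] a by (simp add: power_divide)
    ultimately show ?thesis by (simp add: nn_integral_add nn_integral_cmult)
  qed
  also have "\<dots> = ennreal (a\<^sup>2 / 8) * (J 0 (a/2) + J (a/2) a)"
    by (simp add: distrib_left mult.commute)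
  also have "J 0 (a/2) + J (a/2) a = (\<integral>\<^sup>+z. ennreal ((norm (g' z))\<^sup>2) * indicator {0<..<a} z \<partial>lborel)"
    unfolding J_def using a by (intro nn_integral_interval_split) simp_all
  finally show ?thesis .
qed

lemma smooth3_differentiable: "smooth3 f \<Longrightarrow> f differentiable (at p)"
  using Diter.simps(1) unfolding smooth3_def by metis

lemma smooth3_pd_differentiable:
  assumes "smooth3 f" shows "pd i f differentiable (at p)"
proof -
  have "Diter [unitv i] f differentiable (at p)"
    using assms unfolding smooth3_def by blast
  thus ?thesis by (simp add: pd_def)
qed

lemma smooth3_continuous: "smooth3 f \<Longrightarrow> continuous_on UNIV f"
  by (intro continuous_at_imp_continuous_on ballI differentiable_imp_continuous_within smooth3_differentiable)

lemma smooth3_pd_continuous: "smooth3 f \<Longrightarrow> continuous_on UNIV (pd i f)"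
  by (intro continuous_at_imp_continuous_on ballI differentiable_imp_continuous_within smooth3_pd_differentiable)

lemma has_vector_derivative_pd_z:
  assumes "f differentiable (at (x, y, z))"
  shows "((\<lambda>z. f (x, y, z)) has_vector_derivative pd 2 f (x, y, z)) (at z)"
proof -
  let ?D = "frechet_derivative f (at (x, y, z))"
  have D: "(f has_derivative ?D) (at (x, y, z))"
    using assms by (rule frechet_derivative_works[THEN iffD1])
  have "((\<lambda>z. (x, y, z)) has_derivative (\<lambda>h. (0, 0, h))) (at z)"
    by (auto intro!: derivative_eq_intros)
  from diff_chain_at[OF this D]
  have "((\<lambda>z. f (x, y, z)) has_derivative (\<lambda>h. ?D (0, 0, h))) (at z)"
    unfolding o_def .
  moreover have "(\<lambda>h. ?D (0, 0, h)) = (\<lambda>h. h *\<^sub>R ?D (0, 0, 1))"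
  proof
    fix h :: real
    have "?D (h *\<^sub>R (0, 0, 1)) = h *\<^sub>R ?D (0, 0, 1)"
      by (rule linear_scale[OF has_derivative_linear[OF D]])
    thus "?D (0, 0, h) = h *\<^sub>R ?D (0, 0, 1)" by simp
  qed
  ultimately show ?thesis
    unfolding has_vector_derivative_def pd_def unitv_def by simp
qed

lemma nn_integral_lborel_prod:
  fixes F :: "'a::euclidean_space \<times> 'b::euclidean_space \<Rightarrow> ennreal"
  assumes "F \<in> borel_measurable borel"
  shows "integral\<^sup>N lborel F = (\<integral>\<^sup>+x. \<integral>\<^sup>+y. F (x, y) \<partial>lborel \<partial>lborel)"
proof -
  have "F \<in> borel_measurable (lborel \<Otimes>\<^sub>M lborel)"
    using assms by (simp add: lborel_prod)
  from lborel.nn_integral_fst[OF this] show ?thesis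
    by (simp add: lborel_prod)
qed

lemma nn_integral_lborel_pt:
  fixes F :: "pt \<Rightarrow> ennreal"
  assumes [measurable]: "F \<in> borel_measurable borel"
  shows "integral\<^sup>N lborel F = (\<integral>\<^sup>+x. \<integral>\<^sup>+y. \<integral>\<^sup>+z. F (x, y, z) \<partial>lborel \<partial>lborel \<partial>lborel)"
  by (simp add: nn_integral_lborel_prod)

lemma indicator_cell:
  "indicator (cell a) (x, y, z) = (indicator {0<..<2*pi} x * indicator {0<..<2*pi} y * indicator {0<..<a} z :: ennreal)"
  unfolding cell_def by (simp split: split_indicator)

lemma Poincare_cell_smooth:
  assumes a: "a > 0" and f: "smooth3 f" and "vanish_bdry a f"
  shows "L2_nn_sqnorm a f \<le> ennreal (a\<^sup>2 / 8) * L2_nn_sqnorm a (pd 2 f)"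
proof -
  have [measurable]: "f \<in> borel_measurable borel" "pd 2 f \<in> borel_measurable borel"
    using f by (simp_all add: borel_measurable_continuous_onI smooth3_continuous smooth3_pd_continuous)
  have column: "(\<integral>\<^sup>+z. ennreal ((cmod (f (x, y, z)))\<^sup>2) * indicator (cell a) (x, y, z) \<partial>lborel)
      \<le> (\<integral>\<^sup>+z. ennreal (a\<^sup>2 / 8) * (ennreal ((cmod (pd 2 f (x, y, z)))\<^sup>2) * indicator (cell a) (x, y, z)) \<partial>lborel)" for x y
  proof (cases "x \<in> {0<..<2*pi} \<and> y \<in> {0<..<2*pi}")
    case True
    have "continuous_on UNIV (\<lambda>z. pd 2 f (x, y, z))"
      by (rule continuous_on_compose2[OF smooth3_pd_continuous[OF f]]) (auto intro!: continuous_intros)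
    with a have "(\<integral>\<^sup>+z. ennreal ((cmod (f (x, y, z)))\<^sup>2) * indicator {0<..<a} z \<partial>lborel)
        \<le> ennreal (a\<^sup>2 / 8) * (\<integral>\<^sup>+z. ennreal ((cmod (pd 2 f (x, y, z)))\<^sup>2) * indicator {0<..<a} z \<partial>lborel)"
      using \<open>vanish_bdry a f\<close>
      by (intro Poincare_interval has_vector_derivative_pd_z smooth3_differentiable[OF f])
        (auto simp: vanish_bdry_def)
    also have "\<dots> = (\<integral>\<^sup>+z. ennreal (a\<^sup>2 / 8) * (ennreal ((cmod (pd 2 f (x, y, z)))\<^sup>2) * indicator {0<..<a} z) \<partial>lborel)"
      by (rule nn_integral_cmult[symmetric]) measurable
    finally show ?thesis
      using True by (simp add: indicator_cell)
  qed (auto simp: indicator_cell)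
  have "L2_nn_sqnorm a f = (\<integral>\<^sup>+x. \<integral>\<^sup>+y. \<integral>\<^sup>+z. ennreal ((cmod (f (x, y, z)))\<^sup>2) * indicator (cell a) (x, y, z) \<partial>lborel \<partial>lborel \<partial>lborel)"
    unfolding L2_nn_sqnorm_def by (rule nn_integral_lborel_pt) measurable
  also have "\<dots> \<le> (\<integral>\<^sup>+x. \<integral>\<^sup>+y. \<integral>\<^sup>+z. ennreal (a\<^sup>2 / 8) * (ennreal ((cmod (pd 2 f (x, y, z)))\<^sup>2) * indicator (cell a) (x, y, z)) \<partial>lborel \<partial>lborel \<partial>lborel)"
    by (rule nn_integral_mono, rule nn_integral_mono, rule column)
  also have "\<dots> = (\<integral>\<^sup>+p. ennreal (a\<^sup>2 / 8) * (ennreal ((cmod (pd 2 f p))\<^sup>2) * indicator (cell a) p) \<partial>lborel)"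
    by (rule nn_integral_lborel_pt[symmetric]) measurable
  also have "\<dots> = ennreal (a\<^sup>2 / 8) * L2_nn_sqnorm a (pd 2 f)"
    unfolding L2_nn_sqnorm_def by (rule nn_integral_cmult) measurable
  finally show ?thesis .
qed

lemma Poincare_cell_limit:
  assumes a: "a > 0" and f: "L2 a f" and D: "L2 a D"
    and T: "\<And>n. smooth3 (T n) \<and> vanish_bdry a (T n)"
    and lim_f: "(\<lambda>n. dist2 a (T n) f) \<longlonglongrightarrow> 0" and lim_D: "(\<lambda>n. dist2 a (pd 2 (T n)) D) \<longlonglongrightarrow> 0"
  shows "L2_sqnorm a f \<le> a\<^sup>2 / 8 * L2_sqnorm a D"
proof (rule LIMSEQ_le)
  have T_L2: "L2 a (T n)" "L2 a (pd 2 (T n))" for n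
    using T[of n] by (simp_all add: continuous_imp_L2 smooth3_continuous smooth3_pd_continuous)
  show "(\<lambda>n. L2_sqnorm a (T n)) \<longlonglongrightarrow> L2_sqnorm a f"
    by (rule L2_sqnorm_tendsto[OF f T_L2(1) lim_f])
  show "(\<lambda>n. a\<^sup>2 / 8 * L2_sqnorm a (pd 2 (T n))) \<longlonglongrightarrow> a\<^sup>2 / 8 * L2_sqnorm a D"
    by (intro tendsto_mult_left L2_sqnorm_tendsto[OF D T_L2(2) lim_D])
  show "\<exists>N. \<forall>n\<ge>N. L2_sqnorm a (T n) \<le> a\<^sup>2 / 8 * L2_sqnorm a (pd 2 (T n))"
  proof (intro exI allI impI)
    fix n
    have "L2_nn_sqnorm a (T n) \<le> ennreal (a\<^sup>2 / 8) * L2_nn_sqnorm a (pd 2 (T n))"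
      using T[of n] by (intro Poincare_cell_smooth[OF a]) auto
    hence "ennreal (L2_sqnorm a (T n)) \<le> ennreal (a\<^sup>2 / 8) * ennreal (L2_sqnorm a (pd 2 (T n)))"
      by (simp add: L2_nn_sqnorm_eq T_L2)
    also have "\<dots> = ennreal (a\<^sup>2 / 8 * L2_sqnorm a (pd 2 (T n)))"
      by (rule ennreal_mult[symmetric]) (simp_all add: L2_sqnorm_nonneg)
    finally show "L2_sqnorm a (T n) \<le> a\<^sup>2 / 8 * L2_sqnorm a (pd 2 (T n))"
      by (rule ennreal_le_iff[THEN iffD1, rotated]) (simp add: L2_sqnorm_nonneg)
  qed
qed

lemma Poincare_inV1:
  assumes a: "a > 0" and X: "inV1 a u v Du Dv"
  shows "L2_sqnorm a u \<le> a\<^sup>2 / 8 * L2_sqnorm a (Du 2) \<and> L2_sqnorm a v \<le> a\<^sup>2 / 8 * L2_sqnorm a (Dv 2)"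
proof -
  have two: "2 < (3::nat)" by simp
  from X obtain U V where adm: "\<forall>n. adm1 a (U n) (V n)"
    and lim: "(\<lambda>n. dist2 a (U n) u) \<longlonglongrightarrow> 0" "(\<lambda>n. dist2 a (V n) v) \<longlonglongrightarrow> 0"
    and lim_D: "\<forall>i<3. (\<lambda>n. dist2 a (pd i (U n)) (Du i)) \<longlonglongrightarrow> 0 \<and> (\<lambda>n. dist2 a (pd i (V n)) (Dv i)) \<longlonglongrightarrow> 0"
    unfolding inV1_def by blast
  from X have L2: "L2 a u" "L2 a v" "L2 a (Du 2)" "L2 a (Dv 2)"
    unfolding inV1_def using two by blast+
  show ?thesis
    using Poincare_cell_limit[OF a L2(1,3) _ lim(1)] Poincare_cell_limit[OF a L2(2,4) _ lim(2)] adm lim_D two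
    unfolding adm1_def by blast
qed

lemma Poincare_inV2:
  assumes a: "a > 0" and X: "inV2 a \<theta> D\<theta>"
  shows "L2_sqnorm a \<theta> \<le> a\<^sup>2 / 8 * L2_sqnorm a (D\<theta> 2)"
proof -
  have two: "2 < (3::nat)" by simp
  from X obtain T where adm: "\<forall>n. adm2 a (T n)" and lim: "(\<lambda>n. dist2 a (T n) \<theta>) \<longlonglongrightarrow> 0"
    and lim_D: "\<forall>i<3. (\<lambda>n. dist2 a (pd i (T n)) (D\<theta> i)) \<longlonglongrightarrow> 0"
    unfolding inV2_def by blast
  from X have L2: "L2 a \<theta>" "L2 a (D\<theta> 2)"
    unfolding inV2_def using two by blast+
  show ?thesis
    using Poincare_cell_limit[OF a L2 _ lim] adm lim_D two unfolding adm2_def by blast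
qed

section \<open>The vertical velocity\<close>

definition column_sqnorm :: "real \<Rightarrow> fld \<Rightarrow> real \<Rightarrow> real \<Rightarrow> ennreal" where
  "column_sqnorm a G x y = (\<integral>\<^sup>+t. ennreal ((cmod (G (x, y, t)))\<^sup>2) * indicator {0<..<a} t \<partial>lborel)"

lemma column_sqnorm_measurable [measurable]:
  assumes [measurable]: "G \<in> borel_measurable borel"
  shows "(\<lambda>p::pt. column_sqnorm a G (fst p) (fst (snd p))) \<in> borel_measurable borel"
proof -
  let ?assoc = "\<lambda>q::(real \<times> real) \<times> real. (fst (fst q), snd (fst q), snd q)"
  have [measurable]: "?assoc \<in> borel_measurable borel" "(snd :: (real \<times> real) \<times> real \<Rightarrow> real) \<in> borel_measurable borel"
    "(\<lambda>p::pt. (fst p, fst (snd p))) \<in> borel_measurable borel"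
    by (simp_all add: borel_measurable_continuous_onI continuous_intros)
  have [measurable]: "(\<lambda>q. G (?assoc q)) \<in> borel_measurable borel"
    using measurable_comp[of ?assoc borel borel G borel] by (simp add: o_def)
  have "(\<lambda>q. ennreal ((cmod (G (?assoc q)))\<^sup>2) * indicator {0<..<a} (snd q)) \<in> borel_measurable borel"
    by measurable
  hence "(\<lambda>q. ennreal ((cmod (G (?assoc q)))\<^sup>2) * indicator {0<..<a} (snd q))
      \<in> borel_measurable ((lborel :: (real \<times> real) measure) \<Otimes>\<^sub>M lborel)"
    by (simp add: lborel_prod)
  from lborel.borel_measurable_nn_integral_fst[OF this]
  have "(\<lambda>q. column_sqnorm a G (fst q) (snd q)) \<in> borel_measurable borel"
    unfolding column_sqnorm_def by simp
  from measurable_comp[OF _ this, of "\<lambda>p::pt. (fst p, fst (snd p))"] show ?thesis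
    by (simp add: o_def)
qed

lemma nn_integral_column_sqnorm:
  assumes "a \<ge> 0" and [measurable]: "G \<in> borel_measurable borel"
  shows "(\<integral>\<^sup>+p. column_sqnorm a G (fst p) (fst (snd p)) * indicator (cell a) p \<partial>lborel) = ennreal a * L2_nn_sqnorm a G"
proof -
  have "(\<integral>\<^sup>+p. column_sqnorm a G (fst p) (fst (snd p)) * indicator (cell a) p \<partial>lborel)
      = (\<integral>\<^sup>+x. \<integral>\<^sup>+y. \<integral>\<^sup>+z. column_sqnorm a G x y * indicator (cell a) (x, y, z) \<partial>lborel \<partial>lborel \<partial>lborel)"
    by (subst nn_integral_lborel_pt) simp_all
  also have "\<dots> = (\<integral>\<^sup>+x. \<integral>\<^sup>+y. \<integral>\<^sup>+z. ennreal a * (ennreal ((cmod (G (x, y, z)))\<^sup>2) * indicator (cell a) (x, y, z)) \<partial>lborel \<partial>lborel \<partial>lborel)"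
  proof (rule nn_integral_cong, rule nn_integral_cong)
    fix x y :: real
    have "(\<integral>\<^sup>+z. column_sqnorm a G x y * indicator {0<..<a} z \<partial>lborel) = ennreal a * column_sqnorm a G x y"
      using \<open>a \<ge> 0\<close> by (subst nn_integral_cmult_indicator) (simp_all add: mult.commute)
    also have "\<dots> = (\<integral>\<^sup>+z. ennreal a * (ennreal ((cmod (G (x, y, z)))\<^sup>2) * indicator {0<..<a} z) \<partial>lborel)"
      unfolding column_sqnorm_def by (rule nn_integral_cmult[symmetric]) measurable
    finally have "(\<integral>\<^sup>+z. column_sqnorm a G x y * indicator {0<..<a} z \<partial>lborel)
        = (\<integral>\<^sup>+z. ennreal a * (ennreal ((cmod (G (x, y, z)))\<^sup>2) * indicator {0<..<a} z) \<partial>lborel)" .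
    thus "(\<integral>\<^sup>+z. column_sqnorm a G x y * indicator (cell a) (x, y, z) \<partial>lborel)
        = (\<integral>\<^sup>+z. ennreal a * (ennreal ((cmod (G (x, y, z)))\<^sup>2) * indicator (cell a) (x, y, z)) \<partial>lborel)"
      by (simp add: indicator_cell nn_integral_multc mult_ac split: split_indicator)
  qed
  also have "\<dots> = (\<integral>\<^sup>+p. ennreal a * (ennreal ((cmod (G p))\<^sup>2) * indicator (cell a) p) \<partial>lborel)"
    by (rule nn_integral_lborel_pt[symmetric]) measurable
  also have "\<dots> = ennreal a * L2_nn_sqnorm a G"
    unfolding L2_nn_sqnorm_def by (rule nn_integral_cmult) measurable
  finally show ?thesis .
qed

lemma norm_interval_integral_le_column_sqnorm:
  assumes [measurable]: "G \<in> borel_measurable borel"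
    and z: "0 < z" "z < a" and fin: "column_sqnorm a G x y \<noteq> \<infinity>"
  shows "cmod (LINT t:{0..z}|lborel. G (x, y, t)) \<le> sqrt (a * enn2real (column_sqnorm a G x y))"
proof -
  have "(\<integral>\<^sup>+t. ennreal ((cmod (G (x, y, t)))\<^sup>2) * indicator {0..z} t \<partial>lborel) \<le> column_sqnorm a G x y"
    unfolding column_sqnorm_def
  proof (rule nn_integral_mono_AE)
    show "AE t in lborel. ennreal ((cmod (G (x, y, t)))\<^sup>2) * indicator {0..z} t
        \<le> ennreal ((cmod (G (x, y, t)))\<^sup>2) * indicator {0<..<a} t"
      using AE_lborel_singleton[of 0]
    proof eventually_elim
      case (elim t)
      thus ?case using z by (auto split: split_indicator)
    qed
  qed
  hence "cmod (LINT t:{0..z}|lborel. G (x, y, t)) \<le> sqrt (enn2real (column_sqnorm a G x y)) * sqrt z"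
    using z fin
    by (intro norm_set_integral_le_sqrt[where f="\<lambda>t. cmod (G (x, y, t))" and g="\<lambda>_. 1"])
      (auto simp: ennreal_enn2real_if)
  also have "\<dots> \<le> sqrt (enn2real (column_sqnorm a G x y)) * sqrt a"
    using z by (intro mult_left_mono) auto
  finally show ?thesis
    by (simp add: real_sqrt_mult mult.commute)
qed

lemma nn_integral_column_sqnorm_le:
  assumes a: "a > 0" and Du: "L2 a (Du 0)" and Dv: "L2 a (Dv 1)"
  shows "(\<integral>\<^sup>+p. ennreal a * column_sqnorm a (\<lambda>p. Du 0 p + Dv 1 p) (fst p) (fst (snd p)) * indicator (cell a) p \<partial>lborel)
    \<le> ennreal (2 * a\<^sup>2 * (L2_sqnorm a (Du 0) + L2_sqnorm a (Dv 1)))"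
proof -
  let ?G = "\<lambda>p. Du 0 p + Dv 1 p"
  have [measurable]: "Du 0 \<in> borel_measurable borel" "Dv 1 \<in> borel_measurable borel"
    using Du Dv by (simp_all add: L2_measurable)
  have [measurable]: "?G \<in> borel_measurable borel"
    by measurable
  have "(\<integral>\<^sup>+p. ennreal a * column_sqnorm a ?G (fst p) (fst (snd p)) * indicator (cell a) p \<partial>lborel)
      = ennreal a * (ennreal a * L2_nn_sqnorm a ?G)"
    using a by (simp add: mult.assoc nn_integral_cmult nn_integral_column_sqnorm)
  also have "\<dots> \<le> ennreal a * (ennreal a * (2 * L2_nn_sqnorm a (Du 0) + 2 * L2_nn_sqnorm a (Dv 1)))"
  proof -
    have "L2_nn_sqnorm a ?G \<le> 2 * L2_nn_sqnorm a (Du 0) + 2 * L2_nn_sqnorm a (Dv 1)"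
      using L2_measurable[OF Du] L2_measurable[OF Dv] by (rule L2_nn_sqnorm_add_le)
    thus ?thesis by (intro mult_left_mono) auto
  qed
  also have "\<dots> = ennreal (2 * a\<^sup>2 * (L2_sqnorm a (Du 0) + L2_sqnorm a (Dv 1)))"
  proof -
    let ?A = "L2_sqnorm a (Du 0)" and ?B = "L2_sqnorm a (Dv 1)"
    have nonneg: "0 \<le> a" "0 \<le> ?A" "0 \<le> ?B"
      using a L2_sqnorm_nonneg[of a "Du 0"] L2_sqnorm_nonneg[of a "Dv 1"] by simp_all
    have "ennreal (2 * a\<^sup>2 * (?A + ?B)) = ennreal a * ennreal a * ennreal (2 * ?A + 2 * ?B)"
      using nonneg by (simp add: ennreal_mult[symmetric] power2_eq_square algebra_simps)
    also have "ennreal (2 * ?A + 2 * ?B) = 2 * ennreal ?A + 2 * ennreal ?B"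
      using nonneg by (simp add: ennreal_plus ennreal_mult)
    finally show ?thesis
      using Du Dv by (simp add: L2_nn_sqnorm_eq mult.assoc)
  qed
  finally show ?thesis .
qed

lemma norm_set_integral_wfun_le:
  assumes a: "a > 0" and \<theta>: "L2 a \<theta>" and Du: "L2 a (Du 0)" and Dv: "L2 a (Dv 1)"
    and F: "\<And>p. cmod (F p) \<le> cmod (\<theta> p) * cmod (wfun Du Dv p)"
  shows "cmod (LINT p:cell a|lborel. F p)
    \<le> sqrt (L2_sqnorm a \<theta>) * sqrt (2 * a\<^sup>2 * (L2_sqnorm a (Du 0) + L2_sqnorm a (Dv 1)))"
proof -
  define G where "G p = Du 0 p + Dv 1 p" for p
  define N where "N p = column_sqnorm a G (fst p) (fst (snd p))" for p :: pt
  \<comment> \<open>By Cauchy-Schwarz in the vertical variable, |w| is dominated by the function h, constant on vertical columns.\<close>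
  define h where "h p = sqrt (a * enn2real (N p))" for p :: pt
  have [measurable]: "\<theta> \<in> borel_measurable borel" "Du 0 \<in> borel_measurable borel" "Dv 1 \<in> borel_measurable borel"
    using \<theta> Du Dv by (simp_all add: L2_measurable)
  have G_meas [measurable]: "G \<in> borel_measurable borel"
    unfolding G_def by measurable
  have [measurable]: "N \<in> borel_measurable borel" "h \<in> borel_measurable borel"
    unfolding h_def N_def by measurable
  have N_int: "(\<integral>\<^sup>+p. ennreal a * N p * indicator (cell a) p \<partial>lborel)
      \<le> ennreal (2 * a\<^sup>2 * (L2_sqnorm a (Du 0) + L2_sqnorm a (Dv 1)))"
    unfolding N_def G_def using a Du Dv by (rule nn_integral_column_sqnorm_le)
  have "AE p in lborel. ennreal a * N p * indicator (cell a) p \<noteq> \<infinity>"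
    using N_int by (intro nn_integral_PInf_AE) (auto simp: top_unique)
  hence "AE p in lborel. p \<in> cell a \<longrightarrow> cmod (F p) \<le> cmod (\<theta> p) * h p"
  proof eventually_elim
    case (elim p)
    obtain x y z where p: "p = (x, y, z)" by (cases p)
    show ?case
    proof
      assume "p \<in> cell a"
      hence "0 < z" "z < a" "N p \<noteq> \<infinity>"
        using elim a by (auto simp: p cell_def ennreal_mult_eq_top_iff)
      hence "cmod (LINT t:{0..z}|lborel. G (x, y, t)) \<le> h p"
        using norm_interval_integral_le_column_sqnorm[OF G_meas, of z a x y] by (simp add: p h_def N_def)
      moreover have "wfun Du Dv p = - (LINT t:{0..z}|lborel. G (x, y, t))"
        unfolding p wfun_def G_def by simp
      ultimately have "cmod (wfun Du Dv p) \<le> h p" by simp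
      thus "cmod (F p) \<le> cmod (\<theta> p) * h p"
        using F[of p] by (meson mult_left_mono norm_ge_zero order_trans)
    qed
  qed
  moreover have "(\<integral>\<^sup>+p. ennreal ((h p)\<^sup>2) * indicator (cell a) p \<partial>lborel)
      \<le> ennreal (2 * a\<^sup>2 * (L2_sqnorm a (Du 0) + L2_sqnorm a (Dv 1)))"
  proof -
    have "ennreal ((h p)\<^sup>2) \<le> ennreal a * N p" for p
      unfolding h_def using a by (simp add: ennreal_mult enn2real_nonneg mult_left_mono ennreal_enn2real_if)
    hence "(\<integral>\<^sup>+p. ennreal ((h p)\<^sup>2) * indicator (cell a) p \<partial>lborel) \<le> (\<integral>\<^sup>+p. ennreal a * N p * indicator (cell a) p \<partial>lborel)"
      by (intro nn_integral_mono) (simp split: split_indicator)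
    thus ?thesis using N_int by order
  qed
  ultimately show ?thesis
    using a \<theta> L2_sqnorm_nonneg[of a "Du 0"] L2_sqnorm_nonneg[of a "Dv 1"]
    by (intro norm_set_integral_le_sqrt[where f="\<lambda>p. cmod (\<theta> p)" and g=h])
      (auto simp: h_def L2_nn_sqnorm_eq[symmetric] L2_nn_sqnorm_def L2_sqnorm_nonneg)
qed

section \<open>The V inner product\<close>

lemma sqrt_mult_add3_le:
  fixes x1 x2 x3 y1 y2 y3 :: real
  assumes "0 \<le> x1" "0 \<le> x2" "0 \<le> x3" "0 \<le> y1" "0 \<le> y2" "0 \<le> y3"
  shows "sqrt x1 * sqrt y1 + sqrt x2 * sqrt y2 + sqrt x3 * sqrt y3 \<le> sqrt (x1 + x2 + x3) * sqrt (y1 + y2 + y3)"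
proof -
  define X1 X2 X3 Y1 Y2 Y3 where "X1 = sqrt x1" "X2 = sqrt x2" "X3 = sqrt x3" "Y1 = sqrt y1" "Y2 = sqrt y2" "Y3 = sqrt y3"
  \<comment> \<open>Lagrange's identity.\<close>
  have "(X1\<^sup>2 + X2\<^sup>2 + X3\<^sup>2) * (Y1\<^sup>2 + Y2\<^sup>2 + Y3\<^sup>2) - (X1 * Y1 + X2 * Y2 + X3 * Y3)\<^sup>2
      = (X1 * Y2 - X2 * Y1)\<^sup>2 + (X1 * Y3 - X3 * Y1)\<^sup>2 + (X2 * Y3 - X3 * Y2)\<^sup>2"
    by (simp add: power2_eq_square algebra_simps)
  hence "(X1 * Y1 + X2 * Y2 + X3 * Y3)\<^sup>2 \<le> (x1 + x2 + x3) * (y1 + y2 + y3)"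
    using assms unfolding X1_X2_X3_Y1_Y2_Y3_def by (smt (verit) real_sqrt_pow2 zero_le_power2)
  hence "X1 * Y1 + X2 * Y2 + X3 * Y3 \<le> sqrt ((x1 + x2 + x3) * (y1 + y2 + y3))"
    by (rule real_le_rsqrt)
  thus ?thesis unfolding X1_X2_X3_Y1_Y2_Y3_def by (simp add: real_sqrt_mult)
qed

lemma sqrt_mult_add_le:
  fixes x1 x2 y1 y2 :: real
  assumes "0 \<le> x1" "0 \<le> x2" "0 \<le> y1" "0 \<le> y2"
  shows "sqrt x1 * sqrt y1 + sqrt x2 * sqrt y2 \<le> sqrt (x1 + x2) * sqrt (y1 + y2)"
  using sqrt_mult_add3_le[of x1 x2 0 y1 y2 0] assms by simp

lemma sqrt_mult_le_of_le:
  fixes x y X Y c d e :: real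
  assumes "0 \<le> x" "x \<le> c * X" "0 \<le> y" "y \<le> d * Y" "0 \<le> X" "0 \<le> Y" "c * d = e\<^sup>2" "0 \<le> e"
  shows "sqrt x * sqrt y \<le> e * (sqrt X * sqrt Y)"
proof -
  have "sqrt x * sqrt y \<le> sqrt (c * X) * sqrt (d * Y)"
    using assms by (intro mult_mono real_sqrt_le_mono) auto
  also have "\<dots> = sqrt (e\<^sup>2 * (X * Y))"
    using assms(7) by (simp add: real_sqrt_mult[symmetric] mult_ac)
  finally show ?thesis
    using assms by (simp add: real_sqrt_mult)
qed

lemma norm_sum3_inner_le:
  fixes x y z x' y' z' :: "nat \<Rightarrow> complex" and k :: real
  assumes k: "k \<ge> 0"
  shows "cmod (\<Sum>i<3. x i * cnj (x' i) + y i * cnj (y' i) + of_real k * z i * cnj (z' i))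
    \<le> sqrt (\<Sum>i<3. (cmod (x i))\<^sup>2 + (cmod (y i))\<^sup>2 + k * (cmod (z i))\<^sup>2)
      * sqrt (\<Sum>i<3. (cmod (x' i))\<^sup>2 + (cmod (y' i))\<^sup>2 + k * (cmod (z' i))\<^sup>2)"
proof -
  define d where "d i = (cmod (x i))\<^sup>2 + (cmod (y i))\<^sup>2 + k * (cmod (z i))\<^sup>2" for i
  define d' where "d' i = (cmod (x' i))\<^sup>2 + (cmod (y' i))\<^sup>2 + k * (cmod (z' i))\<^sup>2" for i
  have d0: "0 \<le> d i" "0 \<le> d' i" for i
    using k by (simp_all add: d_def d'_def)
  have "cmod (x i * cnj (x' i) + y i * cnj (y' i) + of_real k * z i * cnj (z' i)) \<le> sqrt (d i) * sqrt (d' i)" for i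
  proof -
    have "cmod (x i * cnj (x' i) + y i * cnj (y' i) + of_real k * z i * cnj (z' i))
        \<le> cmod (x i) * cmod (x' i) + cmod (y i) * cmod (y' i) + k * (cmod (z i) * cmod (z' i))"
      using k by (smt (verit) norm_mult norm_of_real complex_mod_cnj norm_triangle_ineq mult.assoc)
    also have "\<dots> = sqrt ((cmod (x i))\<^sup>2) * sqrt ((cmod (x' i))\<^sup>2) + sqrt ((cmod (y i))\<^sup>2) * sqrt ((cmod (y' i))\<^sup>2)
        + sqrt (k * (cmod (z i))\<^sup>2) * sqrt (k * (cmod (z' i))\<^sup>2)"
      using k by (simp add: real_sqrt_mult)
    also have "\<dots> \<le> sqrt (d i) * sqrt (d' i)"
      unfolding d_def d'_def using k by (intro sqrt_mult_add3_le) auto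
    finally show ?thesis .
  qed
  hence "(\<Sum>i<3. cmod (x i * cnj (x' i) + y i * cnj (y' i) + of_real k * z i * cnj (z' i)))
      \<le> (\<Sum>i<3. sqrt (d i) * sqrt (d' i))"
    by (rule sum_mono)
  with norm_sum have "cmod (\<Sum>i<3. x i * cnj (x' i) + y i * cnj (y' i) + of_real k * z i * cnj (z' i))
      \<le> (\<Sum>i<3. sqrt (d i) * sqrt (d' i))"
    by (rule order_trans)
  also have "\<dots> \<le> sqrt (\<Sum>i<3. d i) * sqrt (\<Sum>i<3. d' i)"
    using d0 by (simp add: eval_nat_numeral sqrt_mult_add3_le)
  finally show ?thesis unfolding d_def d'_def .
qed

definition energy_density :: "real \<Rightarrow> grd \<Rightarrow> grd \<Rightarrow> grd \<Rightarrow> pt \<Rightarrow> real" where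
  "energy_density k Du Dv D\<theta> p = (\<Sum>i<3. (cmod (Du i p))\<^sup>2 + (cmod (Dv i p))\<^sup>2 + k * (cmod (D\<theta> i p))\<^sup>2)"

lemma energy_density_nonneg: "k \<ge> 0 \<Longrightarrow> energy_density k Du Dv D\<theta> p \<ge> 0"
  unfolding energy_density_def by (intro sum_nonneg) auto

lemma energy_density_measurable:
  assumes "\<forall>i<3. L2 a (Du i) \<and> L2 a (Dv i) \<and> L2 a (D\<theta> i)"
  shows "energy_density k Du Dv D\<theta> \<in> borel_measurable borel"
  unfolding energy_density_def
proof (rule borel_measurable_sum)
  fix i :: nat assume "i \<in> {..<3}"
  hence [measurable]: "Du i \<in> borel_measurable borel" "Dv i \<in> borel_measurable borel" "D\<theta> i \<in> borel_measurable borel"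
    using assms L2_measurable by blast+
  show "(\<lambda>p. (cmod (Du i p))\<^sup>2 + (cmod (Dv i p))\<^sup>2 + k * (cmod (D\<theta> i p))\<^sup>2) \<in> borel_measurable borel"
    by measurable
qed

lemma innerV_self:
  "innerV a \<beta> \<gamma> Du Dv D\<theta> Du Dv D\<theta> = of_real (LINT p:cell a|lborel. energy_density (\<beta> / \<gamma>) Du Dv D\<theta> p)"
proof -
  have "(\<Sum>i<3. Du i p * cnj (Du i p) + Dv i p * cnj (Dv i p) + of_real (\<beta> / \<gamma>) * D\<theta> i p * cnj (D\<theta> i p))
      = complex_of_real (energy_density (\<beta> / \<gamma>) Du Dv D\<theta> p)" for p
    unfolding energy_density_def by (simp add: mult.assoc flip: complex_norm_square of_real_power)
  thus ?thesis
    unfolding innerV_def set_integral_complex_of_real[symmetric] by simp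
qed

lemma set_integral_energy_density:
  assumes "\<forall>i<3. L2 a (Du i) \<and> L2 a (Dv i) \<and> L2 a (D\<theta> i)"
  shows "set_integrable lborel (cell a) (energy_density k Du Dv D\<theta>)"
    and "(LINT p:cell a|lborel. energy_density k Du Dv D\<theta> p)
      = (\<Sum>i<3. L2_sqnorm a (Du i) + L2_sqnorm a (Dv i) + k * L2_sqnorm a (D\<theta> i))"
proof -
  let ?e = "\<lambda>i p. (cmod (Du i p))\<^sup>2 + (cmod (Dv i p))\<^sup>2 + k * (cmod (D\<theta> i p))\<^sup>2"
  have e: "set_integrable lborel (cell a) (?e i)
      \<and> (LINT p:cell a|lborel. ?e i p) = L2_sqnorm a (Du i) + L2_sqnorm a (Dv i) + k * L2_sqnorm a (D\<theta> i)"
    if "i < 3" for i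
    using assms that unfolding L2_def L2_sqnorm_def by (simp add: set_integral_add)
  hence "integrable lborel (\<lambda>p. \<Sum>i<3. indicator (cell a) p *\<^sub>R ?e i p)"
    by (intro Bochner_Integration.integrable_sum) (simp add: set_integrable_def)
  thus "set_integrable lborel (cell a) (energy_density k Du Dv D\<theta>)"
    by (simp only: set_integrable_def energy_density_def scaleR_sum_right)
  have "(LINT p:cell a|lborel. energy_density k Du Dv D\<theta> p) = (\<Sum>i<3. LINT p:cell a|lborel. ?e i p)"
    unfolding set_lebesgue_integral_def energy_density_def scaleR_sum_right
    using e by (intro Bochner_Integration.integral_sum) (simp add: set_integrable_def)
  thus "(LINT p:cell a|lborel. energy_density k Du Dv D\<theta> p)
      = (\<Sum>i<3. L2_sqnorm a (Du i) + L2_sqnorm a (Dv i) + k * L2_sqnorm a (D\<theta> i))"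
    using e by simp
qed

lemma normV_eq:
  assumes "\<forall>i<3. L2 a (Du i) \<and> L2 a (Dv i) \<and> L2 a (D\<theta> i)"
  shows "normV a \<beta> \<gamma> Du Dv D\<theta> = sqrt (LINT p:cell a|lborel. energy_density (\<beta> / \<gamma>) Du Dv D\<theta> p)"
    and "normV a \<beta> \<gamma> Du Dv D\<theta>
      = sqrt (\<Sum>i<3. L2_sqnorm a (Du i) + L2_sqnorm a (Dv i) + \<beta> / \<gamma> * L2_sqnorm a (D\<theta> i))"
  using set_integral_energy_density[OF assms] by (simp_all add: normV_def innerV_self)

lemma normV_nonneg:
  assumes "\<forall>i<3. L2 a (Du i) \<and> L2 a (Dv i) \<and> L2 a (D\<theta> i)" and "\<beta> / \<gamma> \<ge> 0"
  shows "normV a \<beta> \<gamma> Du Dv D\<theta> \<ge> 0"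
  unfolding normV_eq(2)[OF assms(1)] using assms(2)
  by (intro real_sqrt_ge_zero sum_nonneg add_nonneg_nonneg mult_nonneg_nonneg L2_sqnorm_nonneg)

lemma sqrt_sqnorms_le_normV:
  assumes L2: "\<forall>i<3. L2 a (Du i) \<and> L2 a (Dv i) \<and> L2 a (D\<theta> i)" and k: "\<beta> / \<gamma> \<ge> 0"
    and "i < 3" "j < 3" "l < 3"
  shows "sqrt (L2_sqnorm a (Du i) + L2_sqnorm a (Dv j) + \<beta> / \<gamma> * L2_sqnorm a (D\<theta> l)) \<le> normV a \<beta> \<gamma> Du Dv D\<theta>"
proof -
  have "L2_sqnorm a (Du i) \<le> (\<Sum>i<3. L2_sqnorm a (Du i))" "L2_sqnorm a (Dv j) \<le> (\<Sum>i<3. L2_sqnorm a (Dv i))"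
    "L2_sqnorm a (D\<theta> l) \<le> (\<Sum>i<3. L2_sqnorm a (D\<theta> i))"
    using assms by (auto intro!: member_le_sum L2_sqnorm_nonneg)
  moreover have "(\<Sum>i<3. L2_sqnorm a (Du i) + L2_sqnorm a (Dv i) + \<beta> / \<gamma> * L2_sqnorm a (D\<theta> i))
      = (\<Sum>i<3. L2_sqnorm a (Du i)) + (\<Sum>i<3. L2_sqnorm a (Dv i)) + \<beta> / \<gamma> * (\<Sum>i<3. L2_sqnorm a (D\<theta> i))"
    by (simp only: sum.distrib sum_distrib_left)
  ultimately have "L2_sqnorm a (Du i) + L2_sqnorm a (Dv j) + \<beta> / \<gamma> * L2_sqnorm a (D\<theta> l)
      \<le> (\<Sum>i<3. L2_sqnorm a (Du i) + L2_sqnorm a (Dv i) + \<beta> / \<gamma> * L2_sqnorm a (D\<theta> i))"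
    using mult_left_mono[OF _ k] by (smt (verit))
  thus ?thesis unfolding normV_eq(2)[OF L2] by (rule real_sqrt_le_mono)
qed

lemma norm_innerV_le:
  assumes L2: "\<forall>i<3. L2 a (Du i) \<and> L2 a (Dv i) \<and> L2 a (D\<theta> i)"
    and L2': "\<forall>i<3. L2 a (Du' i) \<and> L2 a (Dv' i) \<and> L2 a (D\<theta>' i)" and k: "\<beta> / \<gamma> \<ge> 0"
  shows "cmod (innerV a \<beta> \<gamma> Du Dv D\<theta> Du' Dv' D\<theta>') \<le> normV a \<beta> \<gamma> Du Dv D\<theta> * normV a \<beta> \<gamma> Du' Dv' D\<theta>'"
proof -
  let ?e = "energy_density (\<beta> / \<gamma>) Du Dv D\<theta>" and ?e' = "energy_density (\<beta> / \<gamma>) Du' Dv' D\<theta>'"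
  have nn_integral_energy: "(\<integral>\<^sup>+p. ennreal (E p) * indicator (cell a) p \<partial>lborel)
      = ennreal (LINT p:cell a|lborel. E p)"
    if "set_integrable lborel (cell a) E" "\<And>p. E p \<ge> 0" for E
  proof -
    have "(\<integral>\<^sup>+p. ennreal (E p) * indicator (cell a) p \<partial>lborel)
        = (\<integral>\<^sup>+p. ennreal (indicator (cell a) p *\<^sub>R E p) \<partial>lborel)"
      by (intro nn_integral_cong) (simp split: split_indicator)
    also have "\<dots> = ennreal (LINT p:cell a|lborel. E p)"
      using that unfolding set_lebesgue_integral_def set_integrable_def
      by (intro nn_integral_eq_integral) (auto split: split_indicator)
    finally show ?thesis .
  qed
  have integral_nonneg: "(LINT p:cell a|lborel. energy_density (\<beta> / \<gamma>) Du Dv D\<theta> p) \<ge> 0"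
    "(LINT p:cell a|lborel. energy_density (\<beta> / \<gamma>) Du' Dv' D\<theta>' p) \<ge> 0"
    unfolding set_lebesgue_integral_def using k by (simp_all add: integral_nonneg_AE energy_density_nonneg)
  have [measurable]: "?e \<in> borel_measurable borel" "?e' \<in> borel_measurable borel"
    using L2 L2' by (simp_all add: energy_density_measurable)
  show ?thesis
    unfolding innerV_def normV_eq(1)[OF L2] normV_eq(1)[OF L2']
  proof (rule norm_set_integral_le_sqrt[where f="\<lambda>p. sqrt (?e p)" and g="\<lambda>p. sqrt (?e' p)"])
    show "AE p in lborel. p \<in> cell a \<longrightarrow> cmod (\<Sum>i<3. Du i p * cnj (Du' i p) + Dv i p * cnj (Dv' i p)
        + of_real (\<beta> / \<gamma>) * D\<theta> i p * cnj (D\<theta>' i p)) \<le> sqrt (?e p) * sqrt (?e' p)"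
      unfolding energy_density_def using k by (intro AE_I2 impI norm_sum3_inner_le)
  qed (use k set_integral_energy_density(1)[OF L2] set_integral_energy_density(1)[OF L2'] in
      \<open>simp_all add: nn_integral_energy energy_density_nonneg integral_nonneg\<close>)
qed

section \<open>Bounds on the three parts of the form\<close>

lemma inV1_L2:
  assumes "inV1 a u v Du Dv"
  shows "L2 a u" "L2 a v" "\<forall>i<3. L2 a (Du i) \<and> L2 a (Dv i)"
  using assms unfolding inV1_def by blast+

lemma inV2_L2:
  assumes "inV2 a \<theta> D\<theta>"
  shows "L2 a \<theta>" "\<forall>i<3. L2 a (D\<theta> i)"
  using assms unfolding inV2_def by blast+

lemma inV_gradients_L2:
  assumes "inV1 a u v Du Dv" "inV2 a \<theta> D\<theta>"
  shows "\<forall>i<3. L2 a (Du i) \<and> L2 a (Dv i) \<and> L2 a (D\<theta> i)"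
  using inV1_L2(3)[OF assms(1)] inV2_L2(2)[OF assms(2)] by blast

lemma norm_Cform_le:
  assumes a: "a > 0" and k: "\<beta> / \<gamma> \<ge> 0"
    and X: "inV1 a u v Du Dv" "inV2 a \<theta> D\<theta>" and X': "inV1 a u' v' Du' Dv'" "inV2 a \<theta>' D\<theta>'"
  shows "cmod (Cform a u v u' v') \<le> a\<^sup>2 / 8 * (normV a \<beta> \<gamma> Du Dv D\<theta> * normV a \<beta> \<gamma> Du' Dv' D\<theta>')"
proof -
  let ?S = "L2_sqnorm a" and ?c = "a\<^sup>2 / 8"
  have L2: "\<forall>i<3. L2 a (Du i) \<and> L2 a (Dv i) \<and> L2 a (D\<theta> i)" "\<forall>i<3. L2 a (Du' i) \<and> L2 a (Dv' i) \<and> L2 a (D\<theta>' i)"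
    using inV_gradients_L2[OF X] inV_gradients_L2[OF X'] .
  have "cmod (Cform a u v u' v') \<le> sqrt (?S v) * sqrt (?S u') + sqrt (?S u) * sqrt (?S v')"
    using norm_triangle_ineq[of "- (LINT p:cell a|lborel. v p * cnj (u' p))" "LINT p:cell a|lborel. u p * cnj (v' p)"]
      norm_L2_inner_le[OF inV1_L2(2)[OF X(1)] inV1_L2(1)[OF X'(1)]]
      norm_L2_inner_le[OF inV1_L2(1)[OF X(1)] inV1_L2(2)[OF X'(1)]]
    unfolding Cform_def by simp
  also have "\<dots> \<le> ?c * (sqrt (?S (Dv 2)) * sqrt (?S (Du' 2)) + sqrt (?S (Du 2)) * sqrt (?S (Dv' 2)))"
  proof -
    have "sqrt (?S v) * sqrt (?S u') \<le> ?c * (sqrt (?S (Dv 2)) * sqrt (?S (Du' 2)))"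
      using Poincare_inV1[OF a X(1)] Poincare_inV1[OF a X'(1)]
      by (intro sqrt_mult_le_of_le[where c="?c" and d="?c"]) (auto simp: L2_sqnorm_nonneg power2_eq_square)
    moreover have "sqrt (?S u) * sqrt (?S v') \<le> ?c * (sqrt (?S (Du 2)) * sqrt (?S (Dv' 2)))"
      using Poincare_inV1[OF a X(1)] Poincare_inV1[OF a X'(1)]
      by (intro sqrt_mult_le_of_le[where c="?c" and d="?c"]) (auto simp: L2_sqnorm_nonneg power2_eq_square)
    ultimately show ?thesis by (simp only: distrib_left add_mono)
  qed
  also have "\<dots> \<le> ?c * (sqrt (?S (Du 2) + ?S (Dv 2)) * sqrt (?S (Du' 2) + ?S (Dv' 2)))"
    using sqrt_mult_add_le[of "?S (Dv 2)" "?S (Du 2)" "?S (Du' 2)" "?S (Dv' 2)"]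
    by (intro mult_left_mono) (simp_all add: L2_sqnorm_nonneg add.commute)
  also have "\<dots> \<le> ?c * (normV a \<beta> \<gamma> Du Dv D\<theta> * normV a \<beta> \<gamma> Du' Dv' D\<theta>')"
  proof -
    have "0 \<le> \<beta> / \<gamma> * ?S (D\<theta> 2)" "0 \<le> \<beta> / \<gamma> * ?S (D\<theta>' 2)"
      by (intro mult_nonneg_nonneg k L2_sqnorm_nonneg)+
    hence le: "sqrt (?S (Du 2) + ?S (Dv 2)) \<le> sqrt (?S (Du 2) + ?S (Dv 2) + \<beta> / \<gamma> * ?S (D\<theta> 2))"
      "sqrt (?S (Du' 2) + ?S (Dv' 2)) \<le> sqrt (?S (Du' 2) + ?S (Dv' 2) + \<beta> / \<gamma> * ?S (D\<theta>' 2))"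
      by (simp_all only: real_sqrt_le_iff le_add_same_cancel1)
    have two: "2 < (3::nat)" by simp
    have "sqrt (?S (Du 2) + ?S (Dv 2)) \<le> normV a \<beta> \<gamma> Du Dv D\<theta>"
      "sqrt (?S (Du' 2) + ?S (Dv' 2)) \<le> normV a \<beta> \<gamma> Du' Dv' D\<theta>'"
      using order_trans[OF le(1) sqrt_sqnorms_le_normV[OF L2(1) k two two two]]
        order_trans[OF le(2) sqrt_sqnorms_le_normV[OF L2(2) k two two two]] .
    thus ?thesis
      using normV_nonneg[OF L2(1) k] by (intro mult_left_mono mult_mono) (simp_all add: L2_sqnorm_nonneg)
  qed
  finally show ?thesis .
qed

lemma norm_Bform_le:
  assumes a: "a > 0" and \<beta>: "\<beta> > 0" and \<gamma>: "\<gamma> > 0"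
    and X: "inV1 a u v Du Dv" "inV2 a \<theta> D\<theta>" and X': "inV1 a u' v' Du' Dv'" "inV2 a \<theta>' D\<theta>'"
  shows "\<beta> * cmod (Bform a \<theta> Du Dv \<theta>' Du' Dv')
    \<le> a\<^sup>2 / 2 * sqrt (\<beta> * \<gamma>) * (normV a \<beta> \<gamma> Du Dv D\<theta> * normV a \<beta> \<gamma> Du' Dv' D\<theta>')"
proof -
  let ?S = "L2_sqnorm a" and ?k = "\<beta> / \<gamma>"
  define E where "E = ?S (Du 0) + ?S (Dv 1)"
  define E' where "E' = ?S (Du' 0) + ?S (Dv' 1)"
  have k: "?k \<ge> 0" using \<beta> \<gamma> by simp
  have nonneg: "0 \<le> E" "0 \<le> E'" "0 \<le> ?S (D\<theta> 2)" "0 \<le> ?S (D\<theta>' 2)"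
    by (simp_all add: E_def E'_def L2_sqnorm_nonneg)
  have k_\<theta>: "0 \<le> ?k * ?S (D\<theta> 2)" "0 \<le> ?k * ?S (D\<theta>' 2)"
    by (intro mult_nonneg_nonneg k L2_sqnorm_nonneg)+
  have L2: "\<forall>i<3. L2 a (Du i) \<and> L2 a (Dv i) \<and> L2 a (D\<theta> i)" "\<forall>i<3. L2 a (Du' i) \<and> L2 a (Dv' i) \<and> L2 a (D\<theta>' i)"
    using inV_gradients_L2[OF X] inV_gradients_L2[OF X'] .
  have "cmod (Bform a \<theta> Du Dv \<theta>' Du' Dv')
      \<le> cmod (LINT p:cell a|lborel. \<theta> p * cnj (wfun Du' Dv' p)) + cmod (LINT p:cell a|lborel. wfun Du Dv p * cnj (\<theta>' p))"
    unfolding Bform_def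
    using norm_triangle_ineq[of "- (LINT p:cell a|lborel. \<theta> p * cnj (wfun Du' Dv' p))" "LINT p:cell a|lborel. wfun Du Dv p * cnj (\<theta>' p)"]
    by simp
  also have "\<dots> \<le> sqrt (?S \<theta>) * sqrt (2 * a\<^sup>2 * E') + sqrt (?S \<theta>') * sqrt (2 * a\<^sup>2 * E)"
    unfolding E_def E'_def using a L2 inV2_L2(1)[OF X(2)] inV2_L2(1)[OF X'(2)]
    by (intro add_mono norm_set_integral_wfun_le) (auto simp: norm_mult)
  also have "\<dots> \<le> a\<^sup>2 / 2 * (sqrt (?S (D\<theta> 2)) * sqrt E') + a\<^sup>2 / 2 * (sqrt (?S (D\<theta>' 2)) * sqrt E)"
    using Poincare_inV2[OF a X(2)] Poincare_inV2[OF a X'(2)] nonneg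
    by (intro add_mono sqrt_mult_le_of_le[where c="a\<^sup>2 / 8" and d="2 * a\<^sup>2"])
      (simp_all add: L2_sqnorm_nonneg power2_eq_square)
  finally have "\<beta> * cmod (Bform a \<theta> Du Dv \<theta>' Du' Dv')
      \<le> \<beta> * (a\<^sup>2 / 2 * (sqrt (?S (D\<theta> 2)) * sqrt E') + a\<^sup>2 / 2 * (sqrt (?S (D\<theta>' 2)) * sqrt E))"
    using \<beta> by (intro mult_left_mono) auto
  also have "\<dots> = a\<^sup>2 / 2 * (\<beta> * sqrt (?S (D\<theta> 2)) * sqrt E' + sqrt E * (\<beta> * sqrt (?S (D\<theta>' 2))))"
    by (simp add: algebra_simps)
  finally have B: "\<beta> * cmod (Bform a \<theta> Du Dv \<theta>' Du' Dv')
      \<le> a\<^sup>2 / 2 * (\<beta> * sqrt (?S (D\<theta> 2)) * sqrt E' + sqrt E * (\<beta> * sqrt (?S (D\<theta>' 2))))" .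
  \<comment> \<open>Split the factor beta as sqrt (beta gamma) times sqrt (beta / gamma), to match the weights of the V-norm.\<close>
  have split_beta: "\<beta> * sqrt T = sqrt (\<beta> * \<gamma>) * sqrt (?k * T)" for T
    using \<beta> \<gamma> by (simp add: real_sqrt_mult[symmetric] mult_ac power2_eq_square[symmetric]) (simp add: real_sqrt_mult)
  have "\<beta> * sqrt (?S (D\<theta> 2)) * sqrt E' + sqrt E * (\<beta> * sqrt (?S (D\<theta>' 2)))
      = sqrt (\<beta> * \<gamma>) * (sqrt (?k * ?S (D\<theta> 2)) * sqrt E' + sqrt E * sqrt (?k * ?S (D\<theta>' 2)))"
    by (simp add: split_beta algebra_simps)
  also have "\<dots> \<le> sqrt (\<beta> * \<gamma>) * (sqrt (?k * ?S (D\<theta> 2) + E) * sqrt (E' + ?k * ?S (D\<theta>' 2)))"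
    using sqrt_mult_add_le[OF k_\<theta>(1) nonneg(1,2) k_\<theta>(2)] \<beta> \<gamma> by (intro mult_left_mono) simp_all
  also have "\<dots> \<le> sqrt (\<beta> * \<gamma>) * (normV a \<beta> \<gamma> Du Dv D\<theta> * normV a \<beta> \<gamma> Du' Dv' D\<theta>')"
  proof -
    have "sqrt (?k * ?S (D\<theta> 2) + E) \<le> normV a \<beta> \<gamma> Du Dv D\<theta>"
      using sqrt_sqnorms_le_normV[OF L2(1) k, of 0 1 2] unfolding E_def by (simp add: add_ac)
    moreover have "sqrt (E' + ?k * ?S (D\<theta>' 2)) \<le> normV a \<beta> \<gamma> Du' Dv' D\<theta>'"
      using sqrt_sqnorms_le_normV[OF L2(2) k, of 0 1 2] unfolding E'_def by simp
    ultimately show ?thesis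
      using normV_nonneg[OF L2(1) k] nonneg k_\<theta> \<beta> \<gamma> by (intro mult_left_mono mult_mono) auto
  qed
  finally have "\<beta> * sqrt (?S (D\<theta> 2)) * sqrt E' + sqrt E * (\<beta> * sqrt (?S (D\<theta>' 2)))
      \<le> sqrt (\<beta> * \<gamma>) * (normV a \<beta> \<gamma> Du Dv D\<theta> * normV a \<beta> \<gamma> Du' Dv' D\<theta>')" .
  from order_trans[OF B mult_left_mono[OF this]] show ?thesis
    by (simp add: mult.assoc)
qed

lemma norm_Pform_le:
  assumes "\<nu> \<ge> 0" "\<alpha> \<ge> 0" "\<beta> \<ge> 0"
  shows "cmod (Pform a \<nu> \<alpha> \<beta> \<gamma> u v \<theta> Du Dv D\<theta> u' v' \<theta>' Du' Dv' D\<theta>')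
    \<le> \<nu> * cmod (innerV a \<beta> \<gamma> Du Dv D\<theta> Du' Dv' D\<theta>') + \<beta> * cmod (Bform a \<theta> Du Dv \<theta>' Du' Dv')
      + \<alpha> * cmod (Cform a u v u' v')"
  unfolding Pform_def using assms by (smt (verit) norm_mult norm_of_real norm_triangle_ineq)

lemma sq_div_le_div_pi:
  fixes a :: real
  shows "a\<^sup>2 / 2 \<le> 2 * a\<^sup>2 / pi" and "a\<^sup>2 / 8 \<le> 2 * a\<^sup>2 / pi\<^sup>2"
proof -
  have pi4: "pi \<le> 4" using pi_less_4 by simp
  show "a\<^sup>2 / 2 \<le> 2 * a\<^sup>2 / pi" "a\<^sup>2 / 8 \<le> 2 * a\<^sup>2 / pi\<^sup>2"
    using mult_right_mono[OF pi4, of "a\<^sup>2"] mult_right_mono[OF power_mono[OF pi4 pi_ge_zero, of 2], of "a\<^sup>2"] pi_gt_zero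
    by (simp_all add: field_simps)
qed

theorem lemma2:
  fixes a \<nu> \<alpha> \<beta> \<gamma> :: real
    and u v \<theta> u' v' \<theta>' :: fld
    and Du Dv D\<theta> Du' Dv' D\<theta>' :: grd
  assumes "a > 0" "\<nu> > 0" "\<alpha> \<ge> 0" "\<beta> > 0" "\<gamma> > 0"
    and "inV1 a u v Du Dv" "inV2 a \<theta> D\<theta>"
    and "inV1 a u' v' Du' Dv'" "inV2 a \<theta>' D\<theta>'"
  shows "cmod (Pform a \<nu> \<alpha> \<beta> \<gamma> u v \<theta> Du Dv D\<theta> u' v' \<theta>' Du' Dv' D\<theta>')
         \<le> (\<nu> + 2 * a^2 / pi * sqrt (\<beta> * \<gamma>) + 2 * \<alpha> * a^2 / pi^2)
           * normV a \<beta> \<gamma> Du Dv D\<theta> * normV a \<beta> \<gamma> Du' Dv' D\<theta>'"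
proof -
  note X = assms(6,7) and X' = assms(8,9)
  let ?NN = "normV a \<beta> \<gamma> Du Dv D\<theta> * normV a \<beta> \<gamma> Du' Dv' D\<theta>'"
  have k: "\<beta> / \<gamma> \<ge> 0" using assms(4,5) by simp
  have L2: "\<forall>i<3. L2 a (Du i) \<and> L2 a (Dv i) \<and> L2 a (D\<theta> i)" "\<forall>i<3. L2 a (Du' i) \<and> L2 a (Dv' i) \<and> L2 a (D\<theta>' i)"
    using inV_gradients_L2[OF X] inV_gradients_L2[OF X'] .
  have "cmod (Pform a \<nu> \<alpha> \<beta> \<gamma> u v \<theta> Du Dv D\<theta> u' v' \<theta>' Du' Dv' D\<theta>')
      \<le> \<nu> * cmod (innerV a \<beta> \<gamma> Du Dv D\<theta> Du' Dv' D\<theta>') + \<beta> * cmod (Bform a \<theta> Du Dv \<theta>' Du' Dv')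
        + \<alpha> * cmod (Cform a u v u' v')"
    using assms(2-4) by (intro norm_Pform_le) simp_all
  also have "\<dots> \<le> \<nu> * ?NN + a\<^sup>2 / 2 * sqrt (\<beta> * \<gamma>) * ?NN + \<alpha> * (a\<^sup>2 / 8 * ?NN)"
    using norm_innerV_le[OF L2 k] norm_Bform_le[OF assms(1,4,5) X X'] norm_Cform_le[OF assms(1) k X X'] assms(2,3)
    by (intro add_mono mult_left_mono) auto
  \<comment> \<open>The Poincare constant a^2/8 used here is cruder than the optimal a^2/pi^2, but pi \<le> 4 makes it suffice.\<close>
  also have "\<dots> \<le> (\<nu> + 2 * a\<^sup>2 / pi * sqrt (\<beta> * \<gamma>) + 2 * \<alpha> * a\<^sup>2 / pi\<^sup>2) * ?NN"
  proof -
    have NN: "?NN \<ge> 0"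
      using normV_nonneg[OF L2(1) k] normV_nonneg[OF L2(2) k] by simp
    have "a\<^sup>2 / 2 * sqrt (\<beta> * \<gamma>) * ?NN \<le> 2 * a\<^sup>2 / pi * sqrt (\<beta> * \<gamma>) * ?NN"
      using assms(4,5) NN by (intro mult_right_mono sq_div_le_div_pi(1)) simp_all
    moreover have "\<alpha> * (a\<^sup>2 / 8 * ?NN) \<le> \<alpha> * (2 * a\<^sup>2 / pi\<^sup>2 * ?NN)"
      using assms(3) NN by (intro mult_left_mono mult_right_mono sq_div_le_div_pi(2)) simp_all
    moreover have "(\<nu> + 2 * a\<^sup>2 / pi * sqrt (\<beta> * \<gamma>) + 2 * \<alpha> * a\<^sup>2 / pi\<^sup>2) * ?NN
        = \<nu> * ?NN + 2 * a\<^sup>2 / pi * sqrt (\<beta> * \<gamma>) * ?NN + \<alpha> * (2 * a\<^sup>2 / pi\<^sup>2 * ?NN)"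
      by (simp add: algebra_simps)
    ultimately show ?thesis by linarith
  qed
  finally show ?thesis by (simp add: mult.assoc)
qed

end
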